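(* Let $p$ be an odd prime and $A\in\mathbb{Z}$. (i) If $p\mid A^2+4$, then $p\equiv1\pmod4$, $A/2\equiv(-1)^k\left(\frac{p-1}{2}\right)!\pmod p$ for some $k\in\{0,1\}$, and $$T_p(1,-A,-1)\equiv\begin{cases}(-1)^{(p+7)/8}\left(\frac{p-1}{2}\right)!\pmod p&\text{if }p\equiv1\pmod8,\\ (-1)^{k+(p-5)/8}\pmod p&\text{if }p\equiv5\pmod8.\end{cases}$$ (ii) If $\left(\frac{A^2+4}{p}\right)=1$, then $$T_p(1,-A,-1)\equiv\begin{cases}-(A^2+4)^{(p-1)/4}\pmod p&\text{if }p\equiv1\pmod4,\\ -(A^2+4)^{(p+1)/4}u_{(p-1)/2}(A)/2\pmod p&\text{if }p\equiv3\pmod4.\end{cases}$$ (iii) If $\left(\frac{A^2+4}{p}\right)=-1$, then $$T_p(1,-A,-1)\equiv\begin{cases}(-A^2-4)^{(p-1)/4}\pmod p&\text{if }p\equiv1\pmod4,\\ (-A^2-4)^{(p+1)/4}u_{(p+1)/2}(A)/2\pmod p&\text{if }p\equiv3\pmod4.\end{cases}$$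
   Context: $\left(\frac{\cdot}{p}\right)$ denotes the Legendre symbol. For an odd prime $p$ and $a,b,c\in\mathbb{Z}$, $T_p(a,b,c)=\prod_{i,j=1,\ p\nmid ai^2+bij+cj^2}^{(p-1)/2}(ai^2+bij+cj^2)$. For $A\in\mathbb{Z}$ the Lucas sequence $u_n(A)$ is defined by $u_0(A)=0$, $u_1(A)=1$, $u_{n+1}(A)=Au_n(A)+u_{n-1}(A)$ for $n\ge1$. Division by $2$ is understood modulo $p$. *)

theory Defs
  imports "HOL-Number_Theory.Number_Theory"
begin

definition T :: "nat \<Rightarrow> int \<Rightarrow> int \<Rightarrow> int \<Rightarrow> int" where
  "T p a b c = (\<Prod>(i,j)\<in>{(i,j). i \<in> {1..(p-1) div 2} \<and> j \<in> {1..(p-1) div 2}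
        \<and> \<not> int p dvd (a * int i ^ 2 + b * int i * int j + c * int j ^ 2)}.
        (a * int i ^ 2 + b * int i * int j + c * int j ^ 2))"

fun lucas_u :: "int \<Rightarrow> nat \<Rightarrow> int" where
  "lucas_u A 0 = 0"
| "lucas_u A (Suc 0) = 1"
| "lucas_u A (Suc (Suc n)) = A * lucas_u A (Suc n) + lucas_u A n"

end

theory Submission
  imports Defs "HOL-Computational_Algebra.Polynomial"
begin

(*
  Write h = (p - 1)/2, S = {1..h} and Q(i,j) = i^2 - A i j - j^2, so that T = T_p(1,-A,-1) is the
  product of the Q(i,j), (i,j) in S x S, that are prime to p.  If a is a root of x^2 - A x - 1 modulo p,
  then a Q(i,j) = (i - a j)(j + a i) modulo p.  A Gauss-lemma type evaluation of the products of the
  linear forms i - a j and j + a i over S x S (Wilson's theorem, shifted by a j, in every column j)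
  determines T up to powers of a and of 1 + a^2 = a (2a - A).  If p | A^2 + 4 the root is double,
  a = A/2 and a^2 = -1, which gives (i); if A^2 + 4 is a non-zero square, Euler's criterion a^h = +-1
  and Binet's formula for u_n give (ii).  If A^2 + 4 is a non-residue, one computes in Z[alpha] modulo p
  for alpha = (A + sqrt(A^2 + 4))/2: there the Frobenius gives alpha^p = A - alpha, and
  x^(p-1) - 1 = prod (x - a) turns alpha Q(i,j) = (i - alpha j)(j + alpha i) into
  alpha^(h^2 + h) T = (2 alpha - A)^h, which gives (iii).
*)

lemma prod_square_filter_nested:
  fixes S :: "nat set" and P :: "nat \<Rightarrow> nat \<Rightarrow> bool" and f :: "nat \<Rightarrow> nat \<Rightarrow> 'a::comm_monoid_mult"
  assumes "finite S"
  shows "(\<Prod>(i,j)\<in>{(i,j). i \<in> S \<and> j \<in> S \<and> P i j}. f i j) = (\<Prod>j\<in>S. \<Prod>i\<in>{i\<in>S. P i j}. f i j)"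
proof -
  have swap: "{(i,j). i \<in> S \<and> j \<in> S \<and> P i j} = (\<lambda>(j,i). (i,j)) ` (SIGMA j:S. {i\<in>S. P i j})"
    by (auto simp: image_def)
  have inj: "inj_on (\<lambda>(j,i). (i,j)) (SIGMA j:S. {i\<in>S. P i j})"
    by (auto simp: inj_on_def)
  have "(\<Prod>j\<in>S. \<Prod>i\<in>{i\<in>S. P i j}. f i j) = (\<Prod>(j,i)\<in>(SIGMA j:S. {i\<in>S. P i j}). f i j)"
    by (rule prod.Sigma) (use assms in auto)
  then show ?thesis unfolding swap
    by (subst prod.reindex[OF inj]) (simp add: comp_def case_prod_beta)
qed

lemma prod_pairs_swap:
  "(\<Prod>(i,j)\<in>{(i,j). i \<in> S \<and> j \<in> S \<and> P i j}. f i j) = (\<Prod>(i,j)\<in>{(i,j). i \<in> S \<and> j \<in> S \<and> P j i}. f j i)"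
  by (rule prod.reindex_bij_witness[of _ "\<lambda>(i,j). (j,i)" "\<lambda>(i,j). (j,i)"]) auto

lemma prod_pairs_mult:
  "(\<Prod>(i,j)\<in>X. f i j * g i j) = (\<Prod>(i,j)\<in>X. f i j) * (\<Prod>(i,j)\<in>X. g i j)"
  by (simp add: case_prod_beta prod.distrib)

lemma cong_neg_one_power_cancel:
  fixes x m :: int
  assumes "[x * (-1)^(n+1) = (-1)^n] (mod m)"
  shows "[x = -1] (mod m)"
proof -
  have "[x * (-1)^(n+1) * (-1)^(n+1) = (-1)^n * (-1)^(n+1)] (mod m)"
    using assms by (rule cong_scalar_right)
  moreover have "(-1::int)^(n+1) * (-1)^(n+1) = 1" "(-1::int)^n * (-1)^(n+1) = -1"
    by (simp_all flip: power_add)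
  ultimately show ?thesis by (simp add: mult.assoc)
qed

lemma dvd_diff_or_add:
  fixes d x y n :: int
  assumes "d dvd x - n \<or> d dvd x + n" "d dvd y - n \<or> d dvd y + n"
  shows "d dvd x - y \<or> d dvd x + y"
  using assms dvd_diff[of d "x - n" "y - n"] dvd_add[of d "x - n" "y + n"]
    dvd_add[of d "x + n" "y - n"] dvd_diff[of d "x + n" "y + n"] by auto

lemma prime_dvd_coeff_if_roots:
  fixes q :: int and H :: "int poly" and P :: "int set"
  assumes "prime q" and "finite P"
    and "\<forall>x\<in>P. \<forall>y\<in>P. q dvd x - y \<longrightarrow> x = y"
    and "\<forall>x\<in>P. q dvd poly H x" and "degree H < card P"
  shows "q dvd coeff H k"
  using assms(2-)
proof (induction P arbitrary: H k rule: finite_induct)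
  case empty then show ?case by simp
next
  case (insert c P H k)
  have qc: "q dvd poly H c" using insert.prems(2) by simp
  show ?case
  proof (cases "degree H = 0")
    case True
    then obtain h0 where "H = [:h0:]" by (rule degree_eq_zeroE)
    then show ?thesis using qc by (cases k) auto
  next
    case False
    define G where "G = synthetic_div H c"
    have HG: "H = [:-c, 1:] * G + [:poly H c:]"
      unfolding G_def by (rule synthetic_div_correct'[symmetric])
    have "\<forall>x\<in>P. q dvd poly G x"
    proof
      fix x assume xP: "x \<in> P"
      have "poly H x = (x - c) * poly G x + poly H c"
        by (subst HG) (simp add: algebra_simps)
      moreover have "q dvd poly H x" using insert.prems(2) xP by simp
      ultimately have "q dvd (x - c) * poly G x"
        using qc by (metis dvd_add_left_iff)
      moreover have "\<not> q dvd x - c"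
        using insert.prems(1) insert.hyps(2) xP by auto
      ultimately show "q dvd poly G x" using assms(1) by (simp add: prime_dvd_mult_iff)
    qed
    moreover have "degree G < card P"
      using insert.prems(3) False insert.hyps by (simp add: G_def degree_synthetic_div)
    ultimately have "q dvd coeff G j" for j using insert.IH insert.prems(1) by simp
    moreover have "coeff H k = - c * coeff G k + coeff (pCons 0 G) k + coeff [:poly H c:] k"
      by (subst HG) (simp add: mult_pCons_left)
    ultimately show ?thesis using qc by (cases k) auto
  qed
qed

lemma map_poly_of_int_mult:
  "map_poly (of_int :: int \<Rightarrow> 'a::comm_ring_1) (f * g) = map_poly of_int f * map_poly of_int g"
  by (rule poly_eqI) (simp add: coeff_mult coeff_map_poly)

lemma map_poly_of_int_diff:
  "map_poly (of_int :: int \<Rightarrow> 'a::comm_ring_1) (f - g) = map_poly of_int f - map_poly of_int g"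
  by (rule poly_eqI) (simp add: coeff_map_poly)

lemma map_poly_of_int_prod:
  "map_poly (of_int :: int \<Rightarrow> 'a::comm_ring_1) (\<Prod>x\<in>X. f x) = (\<Prod>x\<in>X. map_poly of_int (f x))"
  by (induction X rule: infinite_finite_induct) (simp_all add: map_poly_of_int_mult)

text \<open>With \<open>m = 0\<close> this is Binet's formula for a root \<open>a\<close> of \<open>x\<^sup>2 - A x - 1\<close>; in this form it also
  applies to roots modulo \<open>m\<close>.\<close>
lemma lucas_u_binet_dvd:
  fixes a m :: "'a::comm_ring_1"
  assumes "m dvd a^2 - of_int A * a - 1"
  shows "m dvd (2 * a - of_int A) * of_int (lucas_u A n) - (a^n - (of_int A - a)^n)"
proof -
  define F where "F n = (2 * a - of_int A) * of_int (lucas_u A n) - (a^n - (of_int A - a)^n)" for n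
  have step: "F (Suc (Suc n)) = of_int A * F (Suc n) + F n - (a^n - (of_int A - a)^n) * (a^2 - of_int A * a - 1)" for n
    unfolding F_def by (simp add: power2_eq_square algebra_simps)
  have "m dvd F n \<and> m dvd F (Suc n)"
  proof (induction n)
    case 0 then show ?case by (simp add: F_def)
  next
    case (Suc n)
    then show ?case using assms by (simp add: step dvd_diff dvd_add)
  qed
  then show ?thesis by (simp add: F_def)
qed

section \<open>Arithmetic modulo an odd prime\<close>

locale odd_prime =
  fixes p :: nat
  assumes prime_p: "prime p" and odd_p: "odd p"
begin

definition h :: nat where "h = (p - 1) div 2"

abbreviation S :: "nat set" where "S \<equiv> {1..h}"

lemma p_ge_3: "p \<ge> 3"
  using prime_ge_2_nat[OF prime_p] odd_p by (cases "p = 2") auto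

lemma p_eq: "p = 2 * h + 1"
  using odd_p p_ge_3 unfolding h_def by presburger

lemma h_ge_1: "h \<ge> 1"
  using p_ge_3 p_eq by linarith

lemma power_p: "(x::'a::monoid_mult) ^ p = x ^ (p - 1) * x"
  using p_ge_3 power_Suc2[of x "p - 1"] by simp

lemma prime_int_p: "prime (int p)"
  using prime_p by simp

lemma coprime_int_p: "\<not> int p dvd a \<Longrightarrow> coprime a (int p)"
  by (metis coprime_commute prime_imp_coprime prime_int_p)

lemma not_p_dvd_mult: "\<not> int p dvd a \<Longrightarrow> \<not> int p dvd b \<Longrightarrow> \<not> int p dvd a * b"
  using prime_int_p by (simp add: prime_dvd_mult_iff)

lemma not_p_dvd_4: "\<not> int p dvd 4"
proof
  assume "int p dvd 4"
  then have "int p \<le> 4" using zdvd_imp_le[of "int p" 4] by simp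
  then have "p = 3" using p_ge_3 odd_p by (cases "p = 4") auto
  with \<open>int p dvd 4\<close> show False by simp
qed

lemma p_dvd_small_eq_0: "int p dvd x \<Longrightarrow> \<bar>x\<bar> < int p \<Longrightarrow> x = 0"
  using dvd_imp_le_int[of x "int p"] by force

lemma euler_criterion_p: "[Legendre a (int p) = a ^ h] (mod int p)"
  using euler_criterion[OF prime_p] p_ge_3 by (simp add: h_def)

lemma fermat_int_unit:
  assumes "\<not> int p dvd a"
  shows "[a ^ (p - 1) = 1] (mod int p)"
proof -
  have "Legendre a (int p) ^ 2 = 1"
    using assms by (auto simp: Legendre_def cong_0_iff)
  moreover have "[Legendre a (int p) ^ 2 = (a ^ h) ^ 2] (mod int p)"
    by (rule cong_pow[OF euler_criterion_p])
  ultimately show ?thesis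
    by (metis cong_sym p_eq diff_add_inverse2 power_mult mult.commute)
qed

lemma fermat_int: "[a ^ p = a] (mod int p)"
proof (cases "int p dvd a")
  case True
  then show ?thesis
    by (simp add: cong_iff_dvd_diff power_p algebra_simps right_diff_distrib[symmetric])
next
  case False
  show ?thesis
    using cong_scalar_right[OF fermat_int_unit[OF False], of a] by (simp add: power_p)
qed

lemma power_h_cases:
  assumes "\<not> int p dvd x"
  shows "[x^h = 1] (mod int p) \<or> [x^h = -1] (mod int p)"
proof -
  have "Legendre x (int p) = 1 \<or> Legendre x (int p) = -1"
    using assms by (auto simp: Legendre_def cong_0_iff)
  then show ?thesis using euler_criterion_p[of x] by (auto simp: cong_sym_eq)
qed

lemma square_eq_square_cong:
  assumes "[x^2 = y^2] (mod int p)"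
  shows "[x = y] (mod int p) \<or> [x = - y] (mod int p)"
proof -
  have "int p dvd (x - y) * (x + y)"
    using assms by (simp add: cong_iff_dvd_diff power2_eq_square algebra_simps)
  then show ?thesis using prime_int_p
    by (auto simp: prime_dvd_mult_iff cong_iff_dvd_diff)
qed

lemma cong_half:
  "[2 * (a * (int h + 1)) = a] (mod int p)"
proof -
  have "int p = 2 * int h + 1" using p_eq by simp
  then have "2 * (a * (int h + 1)) - a = a * int p" by (simp add: algebra_simps)
  then show ?thesis by (simp add: cong_iff_dvd_diff)
qed

lemma fact_int_prod: "(fact n :: int) = (\<Prod>i\<in>{1..n}. int i)"
  by (simp add: fact_prod)

lemma fact_h_squared: "[(fact h :: int)^2 = (-1)^(h+1)] (mod int p)"
proof -
  have "(\<Prod>i\<in>{h+1..p-1}. int i) = (\<Prod>i\<in>S. int p - int i)"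
    by (rule prod.reindex_bij_witness[of _ "\<lambda>i. p - i" "\<lambda>i. p - i"]) (use p_eq in auto)
  moreover have "[(\<Prod>i\<in>S. int p - int i) = (\<Prod>i\<in>S. - int i)] (mod int p)"
    by (rule cong_prod) (simp add: cong_def mod_diff_left_eq[symmetric])
  moreover have "(fact (p-1)::int) = fact h * (\<Prod>i\<in>{h+1..p-1}. int i)"
  proof -
    have "{1..p-1} = S \<union> {h+1..p-1}" using p_eq by auto
    then show ?thesis unfolding fact_int_prod by (simp add: prod.union_disjoint)
  qed
  ultimately have "[(fact (p-1)::int) = fact h * ((-1)^h * fact h)] (mod int p)"
    by (simp add: prod_uminus fact_int_prod cong_scalar_left)
  then have "[(fact (p-1)::int) = (-1)^h * (fact h)^2] (mod int p)"
    by (simp add: power2_eq_square ac_simps)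
  then have "[(-1)^h * (fact h :: int)^2 = -1] (mod int p)"
    using wilson_theorem[OF prime_p] cong_sym cong_trans by metis
  then have "[(-1)^h * ((-1)^h * (fact h :: int)^2) = (-1)^h * -1] (mod int p)"
    by (rule cong_scalar_left)
  then show ?thesis by (simp flip: mult.assoc power_add)
qed

section \<open>A Gauss-type product over the half system\<close>

lemma not_p_dvd_half: "j \<in> S \<Longrightarrow> \<not> int p dvd int j"
  using p_dvd_small_eq_0[of "int j"] p_eq by auto

lemma p_dvd_diff_half_iff: "i \<in> S \<Longrightarrow> s \<in> S \<Longrightarrow> int p dvd int i - int s \<longleftrightarrow> i = s"
  using p_dvd_small_eq_0[of "int i - int s"] p_eq by auto

lemma not_p_dvd_add_half: "i \<in> S \<Longrightarrow> s \<in> S \<Longrightarrow> \<not> int p dvd int i + int s"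
  using p_dvd_small_eq_0[of "int i + int s"] p_eq by auto

lemma bij_betw_minus_mod:
  assumes s: "s \<in> {1..p-1}"
  defines "M \<equiv> {1..p-1} - {s}"
  shows "bij_betw (\<lambda>a. nat ((int s - int a) mod int p)) M M"
proof -
  define g where "g a = nat ((int s - int a) mod int p)" for a
  have into: "g a \<in> M" if "a \<in> M" for a
  proof -
    have a: "1 \<le> a" "a \<le> p - 1" "a \<noteq> s" using that unfolding M_def by auto
    have "\<bar>int s - int a\<bar> < int p" using a s by auto
    then have "(int s - int a) mod int p \<noteq> 0"
      using p_dvd_small_eq_0[of "int s - int a"] a by auto
    moreover have "(int s - int a) mod int p \<noteq> int s"
    proof
      assume "(int s - int a) mod int p = int s"
      moreover have "int s mod int p = int s" using s p_ge_3 by (intro mod_pos_pos_trivial) auto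
      ultimately have "(int s - int a) mod int p = int s mod int p" by simp
      then have "int p dvd (int s - int a) - int s" by (simp add: mod_eq_dvd_iff)
      then have "int p dvd int a" by (simp add: dvd_minus_iff)
      then show False using dvd_imp_le[of p a] a p_ge_3 by simp
    qed
    moreover have "0 \<le> (int s - int a) mod int p" "(int s - int a) mod int p < int p"
      using p_ge_3 by auto
    ultimately show ?thesis unfolding M_def g_def by auto
  qed
  have inj: "inj_on g M"
  proof
    fix a b assume ab: "a \<in> M" "b \<in> M" "g a = g b"
    then have "int p dvd int a - int b"
      unfolding g_def using p_ge_3 by (simp add: nat_eq_iff2 mod_eq_dvd_iff)
    moreover have "\<bar>int a - int b\<bar> < int p" using ab unfolding M_def by auto
    ultimately show "a = b" using p_dvd_small_eq_0 by fastforce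
  qed
  have "finite M" unfolding M_def by simp
  from endo_inj_surj[OF this _ inj] into have "g ` M = M" by blast
  with inj show ?thesis unfolding g_def bij_betw_def by simp
qed

lemma wilson_shifted:
  assumes s: "s \<in> {1..p-1}"
  shows "[int s * (\<Prod>a\<in>{1..p-1}-{s}. int s - int a) = -1] (mod int p)"
proof -
  define M where "M = {1..p-1} - {s}"
  have "[(\<Prod>a\<in>M. int s - int a) = (\<Prod>a\<in>M. int (nat ((int s - int a) mod int p)))] (mod int p)"
    by (rule cong_prod) (use p_ge_3 in \<open>simp add: cong_def\<close>)
  also have "(\<Prod>a\<in>M. int (nat ((int s - int a) mod int p))) = (\<Prod>b\<in>M. int b)"
    using prod.reindex_bij_betw[OF bij_betw_minus_mod[OF s], of int] by (simp add: M_def)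
  finally have "[int s * (\<Prod>a\<in>M. int s - int a) = int s * (\<Prod>b\<in>M. int b)] (mod int p)"
    by (rule cong_scalar_left)
  also have "int s * (\<Prod>b\<in>M. int b) = fact (p - 1)"
    unfolding M_def fact_int_prod using s by (simp add: prod.remove)
  also have "[fact (p - 1) = (-1::int)] (mod int p)"
    using wilson_theorem[OF prime_p] by (metis of_int_of_nat_eq of_nat_fact)
  finally show ?thesis unfolding M_def .
qed

lemma half_shift_prod:
  assumes s: "s \<in> S"
  shows "[int s * (\<Prod>i\<in>S-{s}. int i - int s) * (\<Prod>i\<in>S. int i + int s) = (-1)^h] (mod int p)"
proof -
  define X where "X = (\<Prod>i\<in>S-{s}. int i - int s)"
  define Y where "Y = (\<Prod>i\<in>S. int i + int s)"
  have split: "{1..p-1} - {s} = (S - {s}) \<union> {h+1..p-1}" using s p_eq by auto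
  have "(\<Prod>a\<in>{1..p-1}-{s}. int s - int a) =
      (\<Prod>a\<in>S-{s}. int s - int a) * (\<Prod>a\<in>{h+1..p-1}. int s - int a)"
    unfolding split by (rule prod.union_disjoint) auto
  also have "(\<Prod>a\<in>S-{s}. int s - int a) = (-1)^(h-1) * X"
    unfolding X_def using prod_uminus[of "\<lambda>a. int a - int s" "S - {s}"] s by simp
  also have "(\<Prod>a\<in>{h+1..p-1}. int s - int a) = (\<Prod>i\<in>S. int s - (int p - int i))"
    by (rule prod.reindex_bij_witness[of _ "\<lambda>i. p - i" "\<lambda>i. p - i"]) (use p_eq in auto)
  finally have "[int s * (\<Prod>a\<in>{1..p-1}-{s}. int s - int a)
      = int s * ((-1)^(h-1) * X * (\<Prod>i\<in>S. int s - (int p - int i)))] (mod int p)"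
    by (simp add: mult.assoc)
  also have "[int s * ((-1)^(h-1) * X * (\<Prod>i\<in>S. int s - (int p - int i)))
      = int s * ((-1)^(h-1) * X * Y)] (mod int p)"
    unfolding Y_def by (intro cong_scalar_left cong_prod) (simp add: cong_iff_dvd_diff)
  finally have c: "[int s * (\<Prod>a\<in>{1..p-1}-{s}. int s - int a) = int s * ((-1)^(h-1) * X * Y)] (mod int p)" .
  have "[int s * (\<Prod>a\<in>{1..p-1}-{s}. int s - int a) = -1] (mod int p)"
    by (rule wilson_shifted) (use s p_eq in auto)
  from cong_trans[OF cong_sym[OF this] c]
  have "[-1 = (-1)^(h-1) * (int s * X * Y)] (mod int p)" by (simp add: ac_simps)
  then have "[(-1)^(h-1) * -1 = (-1)^(h-1) * ((-1)^(h-1) * (int s * X * Y))] (mod int p)"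
    by (rule cong_scalar_left)
  moreover have "(-1::int)^(h-1) * -1 = (-1)^h"
    using h_ge_1 by (cases h) simp_all
  ultimately show ?thesis unfolding X_def Y_def by (simp add: cong_sym_eq flip: mult.assoc power_add)
qed

lemma half_prods_cong:
  assumes s: "s \<in> S" and xs: "[x = int s] (mod int p)"
  shows "[int s * (\<Prod>i\<in>{i\<in>S. \<not> int p dvd int i - x}. int i - x)
            * (\<Prod>i\<in>{i\<in>S. \<not> int p dvd int i + x}. int i + x) = (-1)^h] (mod int p)"
proof -
  have "int p dvd int i - x \<longleftrightarrow> int p dvd int i - int s" for i
    by (rule cong_dvd_iff, rule cong_diff[OF cong_refl xs])
  then have minus: "{i\<in>S. \<not> int p dvd int i - x} = S - {s}"
    using p_dvd_diff_half_iff[OF _ s] s by auto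
  have "int p dvd int i + x \<longleftrightarrow> int p dvd int i + int s" for i
    by (rule cong_dvd_iff, rule cong_add[OF cong_refl xs])
  then have plus: "{i\<in>S. \<not> int p dvd int i + x} = S"
    using not_p_dvd_add_half[OF _ s] by auto
  have "[int s * (\<Prod>i\<in>S-{s}. int i - x) * (\<Prod>i\<in>S. int i + x) =
         int s * (\<Prod>i\<in>S-{s}. int i - int s) * (\<Prod>i\<in>S. int i + int s)] (mod int p)"
    by (intro cong_mult cong_refl cong_prod cong_diff cong_add xs)
  then show ?thesis unfolding minus plus by (rule cong_trans[OF _ half_shift_prod[OF s]])
qed

definition abs_res :: "int \<Rightarrow> nat" where
  "abs_res x = nat (if x mod int p \<le> int h then x mod int p else int p - x mod int p)"

lemma abs_res_mem:
  assumes "\<not> int p dvd x"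
  shows "abs_res x \<in> S"
proof -
  have "0 < x mod int p" "x mod int p < int p"
    using assms p_ge_3 by (auto simp: dvd_eq_mod_eq_0 order_le_neq_trans)
  moreover have "int p = 2 * int h + 1" using p_eq by simp
  ultimately have "1 \<le> (if x mod int p \<le> int h then x mod int p else int p - x mod int p)"
    "(if x mod int p \<le> int h then x mod int p else int p - x mod int p) \<le> int h"
    by auto
  then show ?thesis unfolding abs_res_def by (simp add: nat_le_iff le_nat_iff)
qed

lemma abs_res_cases:
  "[x = int (abs_res x)] (mod int p) \<or> [x = - int (abs_res x)] (mod int p)"
proof (cases "x mod int p \<le> int h")
  case True
  then show ?thesis using p_ge_3 by (simp add: abs_res_def cong_def)
next
  case False
  have "x - - (int p - x mod int p) = int p * (x div int p + 1)"
    using div_mult_mod_eq[of x "int p"] by (simp add: algebra_simps)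
  moreover have "x mod int p < int p" using p_ge_3 by simp
  ultimately show ?thesis using False by (simp add: abs_res_def cong_iff_dvd_diff)
qed

lemma abs_res_prods_cong:
  assumes "\<not> int p dvd x"
  shows "[int (abs_res x) * (\<Prod>i\<in>{i\<in>S. \<not> int p dvd int i - x}. int i - x)
            * (\<Prod>i\<in>{i\<in>S. \<not> int p dvd int i + x}. int i + x) = (-1)^h] (mod int p)"
  using abs_res_cases[of x]
proof
  assume "[x = int (abs_res x)] (mod int p)"
  then show ?thesis by (rule half_prods_cong[OF abs_res_mem[OF assms]])
next
  assume "[x = - int (abs_res x)] (mod int p)"
  then have "[- x = int (abs_res x)] (mod int p)"
    by (metis cong_minus_minus_iff minus_minus)
  from half_prods_cong[OF abs_res_mem[OF assms] this] show ?thesis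
    by (simp add: ac_simps)
qed

lemma prod_abs_res_mult:
  assumes a: "\<not> int p dvd a"
  shows "(\<Prod>j\<in>S. int (abs_res (a * int j))) = fact h"
proof -
  have nz: "\<not> int p dvd a * int j" if "j \<in> S" for j
    using not_p_dvd_mult[OF a not_p_dvd_half[OF that]] .
  have "inj_on (\<lambda>j. abs_res (a * int j)) S"
  proof
    fix j k assume jk: "j \<in> S" "k \<in> S" and eq: "abs_res (a * int j) = abs_res (a * int k)"
    have res: "int p dvd y - int (abs_res y) \<or> int p dvd y + int (abs_res y)" for y
      using abs_res_cases[of y] by (auto simp: cong_iff_dvd_diff)
    have "int p dvd a * int j - a * int k \<or> int p dvd a * int j + a * int k"
      using dvd_diff_or_add[OF res[of "a * int j"] res[of "a * int k", folded eq]] .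
    moreover have "a * int j - a * int k = a * (int j - int k)" "a * int j + a * int k = a * (int j + int k)"
      by (simp_all add: algebra_simps)
    ultimately have "int p dvd int j - int k \<or> int p dvd int j + int k"
      using a prime_int_p by (auto simp: prime_dvd_mult_iff)
    then show "j = k" using p_dvd_diff_half_iff[OF jk] not_p_dvd_add_half[OF jk] by auto
  qed
  moreover have "(\<lambda>j. abs_res (a * int j)) ` S \<subseteq> S"
    using abs_res_mem[OF nz] by auto
  ultimately have "bij_betw (\<lambda>j. abs_res (a * int j)) S S"
    by (simp add: bij_betw_def endo_inj_surj)
  then show ?thesis
    using prod.reindex_bij_betw[of _ S S int] by (simp add: fact_int_prod)
qed

text \<open>Column \<open>j\<close> contributes \<open>(-1)\<^sup>h\<close> up to the factor \<open>abs_res (a j)\<close>, and these factors run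
  through \<open>S\<close>.\<close>
lemma gauss_product:
  assumes a: "\<not> int p dvd a"
  shows "[(\<Prod>(i,j)\<in>{(i,j). i \<in> S \<and> j \<in> S \<and> \<not> int p dvd int i - a * int j}. int i - a * int j) *
          (\<Prod>(i,j)\<in>{(i,j). i \<in> S \<and> j \<in> S \<and> \<not> int p dvd int j + a * int i}. int j + a * int i) *
          fact h = (-1)^h] (mod int p)"
proof -
  define M where "M j = (\<Prod>i\<in>{i\<in>S. \<not> int p dvd int i - a * int j}. int i - a * int j)" for j
  define P where "P j = (\<Prod>i\<in>{i\<in>S. \<not> int p dvd int i + a * int j}. int i + a * int j)" for j
  have minus: "(\<Prod>(i,j)\<in>{(i,j). i \<in> S \<and> j \<in> S \<and> \<not> int p dvd int i - a * int j}. int i - a * int j)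
      = (\<Prod>j\<in>S. M j)"
    unfolding M_def by (rule prod_square_filter_nested) simp
  have plus: "(\<Prod>(i,j)\<in>{(i,j). i \<in> S \<and> j \<in> S \<and> \<not> int p dvd int j + a * int i}. int j + a * int i)
      = (\<Prod>j\<in>S. P j)"
    unfolding P_def prod_pairs_swap[where f = "\<lambda>i j. int j + a * int i"]
    by (rule prod_square_filter_nested) simp
  have "(\<Prod>j\<in>S. M j) * (\<Prod>j\<in>S. P j) * fact h = (\<Prod>j\<in>S. int (abs_res (a * int j)) * M j * P j)"
    by (simp add: prod_abs_res_mult[OF a, symmetric] prod.distrib mult.commute mult.left_commute)
  also have "[\<dots> = (\<Prod>j\<in>S. (-1)^h)] (mod int p)"
    unfolding M_def P_def
    by (rule cong_prod, rule abs_res_prods_cong, rule not_p_dvd_mult[OF a not_p_dvd_half])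
  also have "(\<Prod>j\<in>S. (-1::int)^h) = (-1)^h"
    by (simp add: power_mult[symmetric] minus_one_power_iff)
  finally show ?thesis unfolding minus plus .
qed

definition zeros_minus :: "int \<Rightarrow> (nat \<times> nat) set" where
  "zeros_minus a = {(i,j). i \<in> S \<and> j \<in> S \<and> int p dvd int i - a * int j}"

definition zeros_plus :: "int \<Rightarrow> (nat \<times> nat) set" where
  "zeros_plus a = {(i,j). i \<in> S \<and> j \<in> S \<and> int p dvd int j + a * int i}"

lemma finite_zeros: "finite (zeros_minus a)" "finite (zeros_plus a)"
  by (auto intro: finite_subset[of _ "S \<times> S"] simp: zeros_minus_def zeros_plus_def)

lemma inj_on_zeros: "inj_on snd (zeros_minus a)" "inj_on fst (zeros_plus a)"
proof -
  show "inj_on snd (zeros_minus a)"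
  proof (rule inj_onI, clarsimp)
    fix i i' j assume "(i,j) \<in> zeros_minus a" "(i',j) \<in> zeros_minus a"
    then have "i \<in> S" "i' \<in> S" "int p dvd int i - a * int j" "int p dvd int i' - a * int j"
      unfolding zeros_minus_def by auto
    moreover have "int p dvd (int i - a * int j) - (int i' - a * int j)"
      using calculation(3,4) by (rule dvd_diff)
    ultimately show "i = i'" using p_dvd_diff_half_iff by simp
  qed
  show "inj_on fst (zeros_plus a)"
  proof (rule inj_onI, clarsimp)
    fix i j j' assume "(i,j) \<in> zeros_plus a" "(i,j') \<in> zeros_plus a"
    then have "j \<in> S" "j' \<in> S" "int p dvd int j + a * int i" "int p dvd int j' + a * int i"
      unfolding zeros_plus_def by auto
    moreover have "int p dvd (int j + a * int i) - (int j' + a * int i)"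
      using calculation(3,4) by (rule dvd_diff)
    ultimately show "j = j'" using p_dvd_diff_half_iff by simp
  qed
qed

text \<open>For \<open>p \<nmid> a\<close> each \<open>i \<in> S\<close> has \<open>a i \<equiv> \<plusminus>s\<close> for exactly one \<open>s \<in> S\<close>; the sign decides
  whether \<open>i\<close> is a second coordinate of \<open>zeros_minus a\<close> or a first coordinate of \<open>zeros_plus a\<close>.\<close>
lemma fst_zeros_plus:
  assumes a: "\<not> int p dvd a"
  shows "fst ` zeros_plus a = S - snd ` zeros_minus a"
proof (rule Set.set_eqI)
  have not_both: "\<not> (int p dvd int k - a * int i \<and> int p dvd int j + a * int i)"
    if "k \<in> S" "j \<in> S" for i j k
    using dvd_add[of "int p" "int k - a * int i" "int j + a * int i"] not_p_dvd_add_half[OF that] by auto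
  fix i
  show "i \<in> fst ` zeros_plus a \<longleftrightarrow> i \<in> S - snd ` zeros_minus a"
  proof (cases "i \<in> S")
    case iS: True
    define s where "s = abs_res (a * int i)"
    have sS: "s \<in> S" unfolding s_def by (rule abs_res_mem, rule not_p_dvd_mult[OF a not_p_dvd_half[OF iS]])
    have "(s, i) \<in> zeros_minus a \<or> (i, s) \<in> zeros_plus a"
      using abs_res_cases[of "a * int i"] sS iS
      by (auto simp: s_def zeros_minus_def zeros_plus_def cong_iff_dvd_diff dvd_diff_commute add.commute)
    then show ?thesis
    proof
      assume m: "(s, i) \<in> zeros_minus a"
      have "i \<notin> fst ` zeros_plus a"
      proof
        assume "i \<in> fst ` zeros_plus a"
        then obtain j where "(i, j) \<in> zeros_plus a" by force
        with m show False using not_both[OF sS, of j i] by (simp add: zeros_minus_def zeros_plus_def)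
      qed
      moreover have "i \<in> snd ` zeros_minus a" using m by force
      ultimately show ?thesis by blast
    next
      assume m: "(i, s) \<in> zeros_plus a"
      have "i \<notin> snd ` zeros_minus a"
      proof
        assume "i \<in> snd ` zeros_minus a"
        then obtain k where "(k, i) \<in> zeros_minus a" by force
        with m show False using not_both[of k s i] sS by (simp add: zeros_minus_def zeros_plus_def)
      qed
      moreover have "i \<in> fst ` zeros_plus a" using m by force
      ultimately show ?thesis using iS by blast
    qed
  qed (auto simp: zeros_minus_def zeros_plus_def)
qed

lemma zeros_card_prod:
  assumes a: "\<not> int p dvd a"
  shows "card (zeros_minus a) + card (zeros_plus a) = h"
    and "(\<Prod>(i,j)\<in>zeros_minus a. int j) * (\<Prod>(i,j)\<in>zeros_plus a. int i) = fact h"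
proof -
  note part = inj_on_zeros[of a] fst_zeros_plus[OF a]
  have sub: "snd ` zeros_minus a \<subseteq> S" by (auto simp: zeros_minus_def)
  have "card (zeros_minus a) = card (snd ` zeros_minus a)"
    "card (zeros_plus a) = card (S - snd ` zeros_minus a)"
    using card_image[OF part(1)] card_image[OF part(2)] part(3) by simp_all
  then show "card (zeros_minus a) + card (zeros_plus a) = h"
    using card_Diff_subset[OF finite_subset[OF sub] sub] card_mono[OF _ sub] by simp
  have "(\<Prod>(i,j)\<in>zeros_minus a. int j) = (\<Prod>j\<in>snd ` zeros_minus a. int j)"
    "(\<Prod>(i,j)\<in>zeros_plus a. int i) = (\<Prod>i\<in>S - snd ` zeros_minus a. int i)"
    using prod.reindex[OF part(1), of int] prod.reindex[OF part(2), of int] part(3)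
    by (simp_all add: comp_def case_prod_beta)
  then show "(\<Prod>(i,j)\<in>zeros_minus a. int j) * (\<Prod>(i,j)\<in>zeros_plus a. int i) = fact h"
    unfolding fact_int_prod using prod.subset_diff[OF sub, of int] by (simp add: mult.commute)
qed

lemma prod_zeros_cong:
  assumes a: "\<not> int p dvd a"
  shows "[(\<Prod>(i,j)\<in>zeros_minus a. int j + a * int i) * (\<Prod>(i,j)\<in>zeros_plus a. int i - a * int j)
          = (1 + a^2)^h * fact h] (mod int p)"
proof -
  have minus: "[(\<Prod>(i,j)\<in>zeros_minus a. int j + a * int i) = (\<Prod>(i,j)\<in>zeros_minus a. (1 + a^2) * int j)] (mod int p)"
  proof (rule cong_prod, clarify)
    fix i j assume "(i,j) \<in> zeros_minus a"
    then have "int p dvd a * (int i - a * int j)" by (simp add: zeros_minus_def)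
    moreover have "int j + a * int i - (1 + a^2) * int j = a * (int i - a * int j)"
      by (simp add: power2_eq_square algebra_simps)
    ultimately show "[int j + a * int i = (1 + a^2) * int j] (mod int p)"
      by (simp add: cong_iff_dvd_diff)
  qed
  have plus: "[(\<Prod>(i,j)\<in>zeros_plus a. int i - a * int j) = (\<Prod>(i,j)\<in>zeros_plus a. (1 + a^2) * int i)] (mod int p)"
  proof (rule cong_prod, clarify)
    fix i j assume "(i,j) \<in> zeros_plus a"
    then have "int p dvd - a * (int j + a * int i)" by (simp add: zeros_plus_def)
    moreover have "int i - a * int j - (1 + a^2) * int i = - a * (int j + a * int i)"
      by (simp add: power2_eq_square algebra_simps)
    ultimately show "[int i - a * int j = (1 + a^2) * int i] (mod int p)"
      by (simp add: cong_iff_dvd_diff)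
  qed
  have "(\<Prod>(i,j)\<in>zeros_minus a. (1 + a^2) * int j) * (\<Prod>(i,j)\<in>zeros_plus a. (1 + a^2) * int i)
      = (1 + a^2) ^ (card (zeros_minus a) + card (zeros_plus a))
        * ((\<Prod>(i,j)\<in>zeros_minus a. int j) * (\<Prod>(i,j)\<in>zeros_plus a. int i))"
    by (simp add: case_prod_beta prod.distrib power_add ac_simps)
  with cong_mult[OF minus plus] show ?thesis unfolding zeros_card_prod[OF a] by simp
qed

lemma gauss_product_units:
  assumes a: "\<not> int p dvd a" and a2: "\<not> int p dvd 1 + a^2"
  defines "U \<equiv> {(i,j). i \<in> S \<and> j \<in> S \<and> \<not> int p dvd int i - a * int j \<and> \<not> int p dvd int j + a * int i}"
  shows "card U = h * h - h"
    and "[(\<Prod>(i,j)\<in>U. (int i - a * int j) * (int j + a * int i)) * (1 + a^2)^h * (fact h)^2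
          = (-1)^h] (mod int p)" (is "[?G * _ * _ = _] (mod _)")
proof -
  have not_both: "\<not> (int p dvd int i - a * int j \<and> int p dvd int j + a * int i)" if "j \<in> S" for i j
  proof
    assume "int p dvd int i - a * int j \<and> int p dvd int j + a * int i"
    then have "int p dvd (int j + a * int i) - a * (int i - a * int j)" by (simp add: dvd_diff)
    moreover have "(int j + a * int i) - a * (int i - a * int j) = int j * (1 + a^2)"
      by (simp add: power2_eq_square algebra_simps)
    ultimately show False using not_p_dvd_mult[OF not_p_dvd_half[OF that] a2] by simp
  qed
  have fin: "finite U" by (auto intro: finite_subset[of _ "S \<times> S"] simp: U_def)
  note fin_zeros = finite_zeros[of a]
  have minus: "{(i,j). i \<in> S \<and> j \<in> S \<and> \<not> int p dvd int i - a * int j} = U \<union> zeros_plus a"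
    and "U \<inter> zeros_plus a = {}"
    using not_both by (auto simp: U_def zeros_plus_def)
  then have prod_minus: "(\<Prod>(i,j)\<in>{(i,j). i \<in> S \<and> j \<in> S \<and> \<not> int p dvd int i - a * int j}. int i - a * int j)
      = (\<Prod>(i,j)\<in>U. int i - a * int j) * (\<Prod>(i,j)\<in>zeros_plus a. int i - a * int j)"
    using fin fin_zeros by (simp add: prod.union_disjoint)
  have plus: "{(i,j). i \<in> S \<and> j \<in> S \<and> \<not> int p dvd int j + a * int i} = U \<union> zeros_minus a"
    and "U \<inter> zeros_minus a = {}"
    using not_both by (auto simp: U_def zeros_minus_def)
  then have prod_plus: "(\<Prod>(i,j)\<in>{(i,j). i \<in> S \<and> j \<in> S \<and> \<not> int p dvd int j + a * int i}. int j + a * int i)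
      = (\<Prod>(i,j)\<in>U. int j + a * int i) * (\<Prod>(i,j)\<in>zeros_minus a. int j + a * int i)"
    using fin fin_zeros by (simp add: prod.union_disjoint)
  have "S \<times> S = U \<union> (zeros_minus a \<union> zeros_plus a)" "zeros_minus a \<inter> zeros_plus a = {}"
    using not_both by (auto simp: U_def zeros_minus_def zeros_plus_def)
  then have "card (S \<times> S) = card U + (card (zeros_minus a) + card (zeros_plus a))"
    using fin fin_zeros \<open>U \<inter> zeros_plus a = {}\<close> \<open>U \<inter> zeros_minus a = {}\<close>
    by (simp add: card_Un_disjoint Int_Un_distrib)
  then have "h * h = card U + (card (zeros_minus a) + card (zeros_plus a))"
    by (simp add: card_cartesian_product)
  then show "card U = h * h - h" using zeros_card_prod(1)[OF a] by simp
  define G where "G = ?G"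
  define Z where "Z = (\<Prod>(i,j)\<in>zeros_minus a. int j + a * int i) * (\<Prod>(i,j)\<in>zeros_plus a. int i - a * int j)"
  have gauss: "[G * Z * fact h = (-1)^h] (mod int p)"
    using gauss_product[OF a] unfolding prod_minus prod_plus prod_pairs_mult G_def Z_def
    by (simp add: ac_simps)
  have "[G * Z * fact h = G * ((1 + a^2)^h * fact h) * fact h] (mod int p)"
    unfolding Z_def by (intro cong_mult cong_refl prod_zeros_cong[OF a])
  from cong_trans[OF cong_sym[OF this] gauss]
  have "[G * ((1 + a^2)^h * fact h) * fact h = (-1)^h] (mod int p)" .
  then show "[G * (1 + a^2)^h * (fact h)^2 = (-1)^h] (mod int p)"
    by (simp add: power2_eq_square ac_simps)
qed

section \<open>Computing \<open>T\<close> from a root of \<open>x\<^sup>2 - A x - 1\<close> modulo \<open>p\<close>\<close>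

definition quad :: "int \<Rightarrow> nat \<Rightarrow> nat \<Rightarrow> int" where
  "quad A i j = int i ^ 2 - A * int i * int j - int j ^ 2"

lemma T_eq_prod_quad:
  "T p 1 (-A) (-1) = (\<Prod>(i,j)\<in>{(i,j). i \<in> S \<and> j \<in> S \<and> \<not> int p dvd quad A i j}. quad A i j)"
  unfolding T_def quad_def h_def by simp

lemma root_not_dvd:
  assumes "int p dvd a^2 - A * a - 1"
  shows "\<not> int p dvd a"
proof
  assume "int p dvd a"
  then have "int p dvd a * (a - A) - (a^2 - A * a - 1)" using assms by (simp add: dvd_diff)
  then show False using p_ge_3 by (simp add: power2_eq_square algebra_simps)
qed

lemma root_one_plus_square_not_dvd:
  assumes root: "int p dvd a^2 - A * a - 1" and disc: "\<not> int p dvd A^2 + 4"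
  shows "\<not> int p dvd 1 + a^2"
proof
  assume d: "int p dvd 1 + a^2"
  then have "int p dvd A * a + 2" using dvd_diff[OF d root] by (simp add: algebra_simps)
  with d have "int p dvd A^2 * (1 + a^2) - (A * a + 2) * (A * a - 2)" by (simp add: dvd_diff)
  moreover have "A^2 * (1 + a^2) - (A * a + 2) * (A * a - 2) = A^2 + 4"
    by (simp add: power2_eq_square algebra_simps)
  ultimately show False using disc by simp
qed

lemma root_disc_square:
  assumes "int p dvd a^2 - A * a - 1"
  shows "[(2 * a - A)^2 = A^2 + 4] (mod int p)"
proof -
  have "(2 * a - A)^2 - (A^2 + 4) = 4 * (a^2 - A * a - 1)"
    by (simp add: power2_eq_square algebra_simps)
  moreover have "int p dvd 4 * (a^2 - A * a - 1)" using assms by (rule dvd_mult)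
  ultimately show ?thesis by (simp only: cong_iff_dvd_diff)
qed

lemma root_if_disc_square:
  assumes "[y^2 = A^2 + 4] (mod int p)"
  shows "int p dvd ((A + y) * (int h + 1))^2 - A * ((A + y) * (int h + 1)) - 1"
proof -
  define a where "a = (A + y) * (int h + 1)"
  have "[2 * a - A = y] (mod int p)"
    using cong_diff[OF cong_half[of "A + y"] cong_refl[of A]] by (simp add: a_def)
  then have "[(2 * a - A)^2 = A^2 + 4] (mod int p)"
    using cong_trans[OF cong_pow assms] by blast
  moreover have "(2 * a - A)^2 - (A^2 + 4) = 4 * (a^2 - A * a - 1)"
    by (simp add: power2_eq_square algebra_simps)
  ultimately have "int p dvd 4 * (a^2 - A * a - 1)" by (simp add: cong_iff_dvd_diff)
  then show ?thesis
    using prime_dvd_multD[OF prime_int_p] not_p_dvd_4 unfolding a_def by blast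
qed

text \<open>Modulo \<open>p\<close>, \<open>a quad A i j \<equiv> (i - a j)(j + a i)\<close> when \<open>a\<close> is a root of \<open>x\<^sup>2 - A x - 1\<close>.\<close>
lemma T_cong_split_root:
  assumes root: "int p dvd a^2 - A * a - 1" and disc: "\<not> int p dvd A^2 + 4"
  shows "[T p 1 (-A) (-1) * a^(h*h - h) * (1 + a^2)^h = -1] (mod int p)"
proof -
  note a = root_not_dvd[OF root] and a2 = root_one_plus_square_not_dvd[OF root disc]
  define U where "U = {(i,j). i \<in> S \<and> j \<in> S \<and> \<not> int p dvd int i - a * int j \<and> \<not> int p dvd int j + a * int i}"
  have factor: "[(int i - a * int j) * (int j + a * int i) = a * quad A i j] (mod int p)" for i j
  proof -
    have "a * quad A i j - (int i - a * int j) * (int j + a * int i) = int i * int j * (a^2 - A * a - 1)"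
      unfolding quad_def by (simp add: power2_eq_square algebra_simps)
    then show ?thesis using root by (simp add: cong_iff_dvd_diff dvd_diff_commute)
  qed
  have "int p dvd quad A i j \<longleftrightarrow> int p dvd (int i - a * int j) * (int j + a * int i)" for i j
    using cong_dvd_iff[OF factor] a prime_int_p by (auto simp: prime_dvd_mult_iff)
  then have U: "U = {(i,j). i \<in> S \<and> j \<in> S \<and> \<not> int p dvd quad A i j}"
    using prime_int_p by (auto simp: U_def prime_dvd_mult_iff)
  define X where "X = a^(h*h - h) * T p 1 (-A) (-1) * (1 + a^2)^h"
  have "[(\<Prod>(i,j)\<in>U. (int i - a * int j) * (int j + a * int i)) = (\<Prod>(i,j)\<in>U. a * quad A i j)] (mod int p)"
    by (rule cong_prod) (auto simp: factor)
  also have "(\<Prod>(i,j)\<in>U. a * quad A i j) = a^(h*h - h) * T p 1 (-A) (-1)"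
    using gauss_product_units(1)[OF a a2] unfolding U_def[symmetric] T_eq_prod_quad U[symmetric]
    by (simp add: prod_pairs_mult)
  finally have "[(\<Prod>(i,j)\<in>U. (int i - a * int j) * (int j + a * int i)) * (1 + a^2)^h * (fact h)^2
      = X * (fact h)^2] (mod int p)"
    unfolding X_def by (intro cong_scalar_right)
  from cong_trans[OF cong_sym[OF this] gauss_product_units(2)[OF a a2, folded U_def]]
  have "[X * (fact h)^2 = (-1)^h] (mod int p)" .
  from cong_trans[OF cong_sym[OF cong_scalar_left[OF fact_h_squared, of X]] this]
  have "[X * (-1)^(h+1) = (-1)^h] (mod int p)" .
  then have "[X = -1] (mod int p)" by (rule cong_neg_one_power_cancel)
  then show ?thesis by (simp add: X_def ac_simps)
qed

lemma T_cong_root: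
  assumes root: "int p dvd a^2 - A * a - 1" and disc: "\<not> int p dvd A^2 + 4"
  shows "[T p 1 (-A) (-1) * (a^h)^h * (2 * a - A)^h = -1] (mod int p)"
proof -
  have eq: "1 + a^2 - a * (2 * a - A) = - (a^2 - A * a - 1)"
    by (simp add: power2_eq_square algebra_simps)
  have "[1 + a^2 = a * (2 * a - A)] (mod int p)"
    unfolding cong_iff_dvd_diff eq using root by (simp only: dvd_minus_iff)
  then have "[(1 + a^2)^h = a^h * (2 * a - A)^h] (mod int p)"
    using cong_pow by (fastforce simp: power_mult_distrib)
  then have "[T p 1 (-A) (-1) * a^(h*h - h) * (1 + a^2)^h
      = T p 1 (-A) (-1) * a^(h*h - h) * (a^h * (2 * a - A)^h)] (mod int p)"
    by (rule cong_scalar_left)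
  moreover have "T p 1 (-A) (-1) * a^(h*h - h) * (a^h * (2 * a - A)^h)
      = T p 1 (-A) (-1) * (a^h)^h * (2 * a - A)^h"
  proof -
    have "a^(h*h - h) * a^h = (a^h)^h"
      by (simp flip: power_add power_mult)
    then show ?thesis by (simp add: ac_simps)
  qed
  ultimately show ?thesis
    using cong_trans[OF cong_sym T_cong_split_root[OF root disc]] by simp
qed

lemma double_root_facts:
  assumes a2: "int p dvd a^2 + 1" and A: "int p dvd 2 * a - A"
  shows "\<not> int p dvd a"
    and "[(int i - a * int j)^2 = quad A i j] (mod int p)"
    and "[int j + a * int i = a * (int i - a * int j)] (mod int p)"
    and "int p dvd int j + a * int i \<longleftrightarrow> int p dvd int i - a * int j"
proof -
  show a: "\<not> int p dvd a"
  proof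
    assume "int p dvd a"
    then have "int p dvd (a^2 + 1) - a * a" using a2 by (simp add: dvd_diff)
    then show False using p_ge_3 by (simp add: power2_eq_square)
  qed
  have "(int i - a * int j)^2 - quad A i j = int i * int j * (A - 2 * a) + int j^2 * (a^2 + 1)"
    unfolding quad_def by (simp add: power2_eq_square algebra_simps)
  moreover have "int p dvd int i * int j * (A - 2 * a) + int j^2 * (a^2 + 1)"
    using A a2 by (simp add: dvd_diff_commute[of _ A] dvd_add)
  ultimately show "[(int i - a * int j)^2 = quad A i j] (mod int p)"
    by (simp add: cong_iff_dvd_diff)
  have "int j + a * int i - a * (int i - a * int j) = int j * (a^2 + 1)"
    by (simp add: power2_eq_square algebra_simps)
  then show plus: "[int j + a * int i = a * (int i - a * int j)] (mod int p)"
    using a2 by (simp add: cong_iff_dvd_diff)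
  show "int p dvd int j + a * int i \<longleftrightarrow> int p dvd int i - a * int j"
    using cong_dvd_iff[OF plus] a prime_int_p by (simp add: prime_dvd_mult_iff)
qed

lemma T_double_root_prod_cong:
  assumes a2: "int p dvd a^2 + 1" and A: "int p dvd 2 * a - A"
  shows "2 * card (zeros_minus a) = h"
    and "[T p 1 (-A) (-1) * a^(h*h - card (zeros_minus a)) * fact h = (-1)^h] (mod int p)"
proof -
  note a = double_root_facts(1)[OF a2 A] and square = double_root_facts(2)[OF a2 A]
    and plus = double_root_facts(3)[OF a2 A] and plus_iff = double_root_facts(4)[OF a2 A]
  have quad_iff: "int p dvd quad A i j \<longleftrightarrow> int p dvd int i - a * int j" for i j
    using cong_dvd_iff[OF square] prime_int_p by (simp add: prime_dvd_power_iff)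
  have "zeros_minus a = zeros_plus a" by (auto simp: zeros_minus_def zeros_plus_def plus_iff)
  then show "2 * card (zeros_minus a) = h" using zeros_card_prod(1)[OF a] by simp
  define N where "N = {(i,j). i \<in> S \<and> j \<in> S \<and> \<not> int p dvd int i - a * int j}"
  have "S \<times> S = N \<union> zeros_minus a" "N \<inter> zeros_minus a = {}" "finite N"
    by (auto simp: N_def zeros_minus_def intro: finite_subset[of _ "S \<times> S"])
  then have "card (S \<times> S) = card N + card (zeros_minus a)"
    using finite_zeros(1)[of a] by (simp add: card_Un_disjoint)
  then have card_N: "card N = h * h - card (zeros_minus a)"
    by (simp add: card_cartesian_product)
  define P where "P = (\<Prod>(i,j)\<in>N. int i - a * int j)"
  have "[(\<Prod>(i,j)\<in>N. int j + a * int i) = (\<Prod>(i,j)\<in>N. a * (int i - a * int j))] (mod int p)"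
    by (rule cong_prod) (auto simp: plus)
  then have plus_prod: "[(\<Prod>(i,j)\<in>N. int j + a * int i) = a ^ card N * P] (mod int p)"
    by (simp add: P_def prod_pairs_mult)
  have T: "[T p 1 (-A) (-1) = P * P] (mod int p)"
    unfolding T_eq_prod_quad P_def prod_pairs_mult[symmetric] quad_iff N_def[symmetric]
    by (rule cong_prod) (use square in \<open>auto simp: power2_eq_square cong_sym\<close>)
  have "[P * (\<Prod>(i,j)\<in>N. int j + a * int i) * fact h = (-1)^h] (mod int p)"
    using gauss_product[OF a] unfolding plus_iff N_def[symmetric] P_def[symmetric] .
  from cong_trans[OF cong_sym[OF cong_scalar_right[OF cong_scalar_left[OF plus_prod, of P], of "fact h"]] this]
  have "[(P * P) * a ^ card N * fact h = (-1)^h] (mod int p)"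
    by (simp only: ac_simps)
  from cong_trans[OF cong_scalar_right[OF cong_scalar_right[OF T, of "a ^ card N"], of "fact h"] this]
  show "[T p 1 (-A) (-1) * a^(h*h - card (zeros_minus a)) * fact h = (-1)^h] (mod int p)"
    unfolding card_N .
qed

lemma T_cong_double_root:
  assumes a2: "int p dvd a^2 + 1" and A: "int p dvd 2 * a - A"
  defines "c \<equiv> card (zeros_minus a)"
  shows "h = 2 * c" and "[T p 1 (-A) (-1) = - (a^c * fact h)] (mod int p)"
proof -
  show hc: "h = 2 * c" using T_double_root_prod_cong(1)[OF a2 A] by (simp add: c_def)
  have "[a^2 = -1] (mod int p)" using a2 by (simp add: cong_iff_dvd_diff)
  then have "[a^(h*h) = 1] (mod int p)"
    using cong_pow[of "a^2" "-1" _ "2*c*c"] hc by (simp add: power_mult[symmetric] ac_simps)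
  then have "[T p 1 (-A) (-1) * fact h * a^(h*h) = T p 1 (-A) (-1) * fact h * 1] (mod int p)"
    by (rule cong_scalar_left)
  moreover have "T p 1 (-A) (-1) * a^(h*h - c) * fact h * a^c = T p 1 (-A) (-1) * fact h * a^(h*h)"
    using hc by (simp add: ac_simps flip: power_add)
  ultimately have "[T p 1 (-A) (-1) * a^(h*h - c) * fact h * a^c = T p 1 (-A) (-1) * fact h] (mod int p)"
    by (simp only: mult_1_right)
  moreover have "[T p 1 (-A) (-1) * a^(h*h - c) * fact h * a^c = a^c] (mod int p)"
    using cong_scalar_right[OF T_double_root_prod_cong(2)[OF a2 A, folded c_def], of "a^c"] hc by simp
  ultimately have "[T p 1 (-A) (-1) * fact h = a^c] (mod int p)"
    by (rule cong_trans[OF cong_sym])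
  from cong_scalar_right[OF this, of "fact h"]
  have "[T p 1 (-A) (-1) * (fact h)^2 = a^c * fact h] (mod int p)"
    by (simp add: power2_eq_square mult.assoc)
  moreover have "[T p 1 (-A) (-1) * (fact h)^2 = - T p 1 (-A) (-1)] (mod int p)"
    using cong_scalar_left[OF fact_h_squared, of "T p 1 (-A) (-1)"] hc by simp
  ultimately have "[- T p 1 (-A) (-1) = a^c * fact h] (mod int p)"
    by (rule cong_trans[OF cong_sym, rotated])
  then have "[- (- T p 1 (-A) (-1)) = - (a^c * fact h)] (mod int p)"
    by (simp only: cong_minus_minus_iff)
  then show "[T p 1 (-A) (-1) = - (a^c * fact h)] (mod int p)" by simp
qed

lemma double_root_of_disc:
  assumes D: "int p dvd A^2 + 4"
  shows "int p dvd 2 * (A * (int h + 1)) - A" and "int p dvd (A * (int h + 1))^2 + 1"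
proof -
  define a where "a = A * (int h + 1)"
  show A: "int p dvd 2 * (A * (int h + 1)) - A" using cong_half[of A] by (simp add: cong_iff_dvd_diff)
  have "int p dvd (A^2 + 4) + (2 * a - A) * (2 * a + A)" using D A by (simp add: a_def)
  also have "(A^2 + 4) + (2 * a - A) * (2 * a + A) = 4 * (a^2 + 1)"
    by (simp add: power2_eq_square algebra_simps)
  finally show "int p dvd (A * (int h + 1))^2 + 1"
    using prime_dvd_multD[OF prime_int_p] not_p_dvd_4 unfolding a_def by blast
qed

lemma T_cong_double_root_1_mod_8:
  assumes a2: "int p dvd a^2 + 1" and A: "int p dvd 2 * a - A" and p8: "p mod 8 = 1"
  shows "[T p 1 (-A) (-1) = (-1)^((p+7) div 8) * fact h] (mod int p)"
proof -
  define c where "c = card (zeros_minus a)"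
  note hc = T_cong_double_root(1)[OF a2 A, folded c_def]
  have "even c" using p8 p_eq hc by presburger
  then obtain s where cs: "c = 2 * s" ..
  have "[T p 1 (-A) (-1) = - (a^c * fact h)] (mod int p)"
    using T_cong_double_root(2)[OF a2 A] by (simp add: c_def)
  also have "[- (a^c * fact h) = - ((-1)^s * fact h)] (mod int p)"
    unfolding cong_minus_minus_iff cs power_mult
    by (intro cong_scalar_right cong_pow) (use a2 in \<open>simp add: cong_iff_dvd_diff\<close>)
  also have "- ((-1)^s * fact h) = (-1)^((p+7) div 8) * (fact h :: int)"
    using p_eq hc cs by simp
  finally show ?thesis .
qed

lemma T_cong_double_root_5_mod_8:
  assumes a2: "int p dvd a^2 + 1" and A: "int p dvd 2 * a - A" and p8: "p mod 8 = 5"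
    and ak: "[a = (-1)^k * fact h] (mod int p)"
  shows "[T p 1 (-A) (-1) = (-1)^(k + (p-5) div 8)] (mod int p)"
proof -
  define c where "c = card (zeros_minus a)"
  note hc = T_cong_double_root(1)[OF a2 A, folded c_def]
  have "odd c" using p8 p_eq hc by presburger
  then obtain s where cs: "c = 2 * s + 1" using oddE by blast
  have "a^c * fact h = a^(2*s) * (a * fact h)" by (simp add: cs power_add mult.assoc)
  then have "[T p 1 (-A) (-1) = - (a^(2*s) * (a * fact h))] (mod int p)"
    using T_cong_double_root(2)[OF a2 A, folded c_def] by (simp add: mult.assoc)
  also have "[- (a^(2*s) * (a * fact h)) = - ((-1)^s * ((-1)^k * fact h * fact h))] (mod int p)"
    unfolding cong_minus_minus_iff power_mult
    by (rule cong_mult[OF cong_pow cong_scalar_right[OF ak]]) (use a2 in \<open>simp add: cong_iff_dvd_diff\<close>)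
  also have "- ((-1)^s * ((-1)^k * fact h * fact h)) = - ((-1)^s * ((-1)^k * (fact h)^2 :: int))"
    by (simp add: power2_eq_square mult.assoc)
  also have "[- ((-1)^s * ((-1)^k * (fact h)^2)) = - ((-1)^s * ((-1)^k * -1))] (mod int p)"
    unfolding cong_minus_minus_iff using fact_h_squared hc by (intro cong_scalar_left) simp
  also have "- ((-1)^s * ((-1)^k * -1)) = (-1::int)^(k + (p-5) div 8)"
    using p_eq hc cs by (simp add: power_add)
  finally show ?thesis .
qed

lemma T_cong_if_p_dvd_disc:
  assumes D: "int p dvd A^2 + 4"
  shows "p mod 4 = 1 \<and>
    (\<exists>k::nat\<in>{0,1}. [A = 2 * (-1)^k * fact h] (mod int p) \<and>
       (p mod 8 = 1 \<longrightarrow> [T p 1 (-A) (-1) = (-1)^((p+7) div 8) * fact h] (mod int p)) \<and>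
       (p mod 8 = 5 \<longrightarrow> [T p 1 (-A) (-1) = (-1)^(k + (p-5) div 8)] (mod int p)))"
proof -
  define a where "a = A * (int h + 1)"
  note A = double_root_of_disc(1)[OF D, folded a_def] and a2 = double_root_of_disc(2)[OF D, folded a_def]
  note hc = T_cong_double_root(1)[OF a2 A]
  have "[a^2 = -1] (mod int p)" using a2 by (simp add: cong_iff_dvd_diff)
  moreover have "[(fact h)^2 = (-1::int)] (mod int p)" using fact_h_squared hc by simp
  ultimately have "[a = fact h] (mod int p) \<or> [a = - fact h] (mod int p)"
    by (intro square_eq_square_cong) (rule cong_trans[OF _ cong_sym])
  then obtain k :: nat where k: "k \<in> {0,1}" and ak: "[a = (-1)^k * fact h] (mod int p)"
    by (metis insertCI power_0 power_one_right mult_1 mult_minus1)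
  have "[A = 2 * ((-1)^k * fact h)] (mod int p)"
    using cong_trans[OF _ cong_scalar_left[OF ak]] A by (simp add: cong_iff_dvd_diff dvd_diff_commute)
  moreover have "p mod 4 = 1" using p_eq hc by presburger
  ultimately show ?thesis
    using k T_cong_double_root_1_mod_8[OF a2 A] T_cong_double_root_5_mod_8[OF a2 A _ ak]
    by (auto simp: mult.assoc)
qed

lemma residue_root:
  assumes L: "Legendre (A^2 + 4) (int p) = 1"
  obtains a where "int p dvd a^2 - A * a - 1"
    and "\<not> int p dvd A^2 + 4" and "[(A^2 + 4)^h = 1] (mod int p)"
proof -
  have "\<not> int p dvd A^2 + 4" and "QuadRes (int p) (A^2 + 4)"
    using L by (auto simp: Legendre_def cong_0_iff split: if_splits)
  moreover from this(2) obtain y where "[y^2 = A^2 + 4] (mod int p)" by (auto simp: QuadRes_def)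
  moreover have "[(A^2 + 4)^h = 1] (mod int p)"
    using euler_criterion_p[of "A^2 + 4"] L by (simp add: cong_sym_eq)
  ultimately show thesis using that root_if_disc_square by blast
qed

lemma lucas_u_cong_root:
  assumes root: "int p dvd a^2 - A * a - 1" and "odd h"
    and ae: "[a^h = e] (mod int p)" and ee: "e * e = 1"
  shows "[(2 * a - A) * lucas_u A h = 2 * e] (mod int p)"
proof -
  define b where "b = A - a"
  have "[a * b = -1] (mod int p)"
  proof -
    have "a * b - -1 = - (a^2 - A * a - 1)" unfolding b_def by (simp add: power2_eq_square algebra_simps)
    then show ?thesis unfolding cong_iff_dvd_diff using root by (simp only: dvd_minus_iff)
  qed
  then have "[a^h * b^h = -1] (mod int p)"
    using cong_pow[of "a * b" "-1" _ h] \<open>odd h\<close> by (simp add: power_mult_distrib)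
  from cong_trans[OF cong_sym[OF cong_scalar_right[OF ae, of "b^h"]] this]
  have "[e * (e * b^h) = e * -1] (mod int p)" by (rule cong_scalar_left)
  then have bh: "[b^h = - e] (mod int p)" using ee by (simp add: mult.assoc[symmetric])
  have "[(2 * a - A) * lucas_u A h = a^h - b^h] (mod int p)"
    using lucas_u_binet_dvd[of "int p" a A h] root unfolding b_def by (simp add: cong_iff_dvd_diff)
  also have "[a^h - b^h = e - - e] (mod int p)" by (intro cong_diff ae bh)
  finally show ?thesis by simp
qed

lemma T_cong_residue_1_mod_4:
  assumes L: "Legendre (A^2 + 4) (int p) = 1" and p4: "p mod 4 = 1"
  shows "[T p 1 (-A) (-1) = - ((A^2 + 4) ^ ((p-1) div 4))] (mod int p)"
proof -
  define D where "D = A^2 + 4"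
  obtain a where root: "int p dvd a^2 - A * a - 1" and disc: "\<not> int p dvd D" and Dh: "[D^h = 1] (mod int p)"
    using residue_root[OF L] unfolding D_def .
  have "even h" using p4 p_eq by presburger
  then obtain t where ht: "h = 2 * t" ..
  have "[(a^h)^2 = 1] (mod int p)"
    using power_h_cases[OF root_not_dvd[OF root]] cong_pow[of "a^h" "-1" _ 2] cong_pow[of "a^h" 1 _ 2]
    by auto
  then have c1: "[(a^h)^h = 1] (mod int p)"
    using cong_pow[of "(a^h)^2" 1 _ t] by (simp add: ht power_mult)
  have c2: "[(2 * a - A)^h = D^t] (mod int p)"
    using cong_pow[OF root_disc_square[OF root], of t] by (simp add: ht power_mult D_def)
  have "[T p 1 (-A) (-1) * 1 * D^t = T p 1 (-A) (-1) * (a^h)^h * (2 * a - A)^h] (mod int p)"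
    by (rule cong_mult[OF cong_scalar_left[OF cong_sym[OF c1]] cong_sym[OF c2]])
  from cong_trans[OF this T_cong_root[OF root disc[unfolded D_def]]]
  have TD: "[T p 1 (-A) (-1) * D^t = -1] (mod int p)" by simp
  have "D^h = D^t * D^t" using ht by (simp add: mult_2 power_add)
  with cong_scalar_left[OF cong_sym[OF Dh], of "T p 1 (-A) (-1)"]
  have "[T p 1 (-A) (-1) = (T p 1 (-A) (-1) * D^t) * D^t] (mod int p)"
    by (simp add: mult.assoc)
  also have "[(T p 1 (-A) (-1) * D^t) * D^t = -1 * D^t] (mod int p)"
    by (rule cong_scalar_right[OF TD])
  finally show ?thesis using p_eq ht by (simp add: D_def)
qed

lemma T_cong_root_odd:
  assumes root: "int p dvd a^2 - A * a - 1" and disc: "\<not> int p dvd A^2 + 4"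
    and Dh: "[(A^2 + 4)^h = 1] (mod int p)" and "odd h"
    and ae: "[a^h = e] (mod int p)" and e: "e = 1 \<or> e = -1"
  shows "[2 * T p 1 (-A) (-1) = - (2 * e * (2 * a - A)^h)] (mod int p)"
proof -
  define \<delta> where "\<delta> = 2 * a - A"
  have "[(a^h)^h = e] (mod int p)"
    using cong_pow[OF ae, of h] e \<open>odd h\<close> by auto
  from cong_trans[OF cong_sym[OF cong_scalar_right[OF cong_scalar_left[OF this]]] T_cong_root[OF root disc]]
  have K: "[T p 1 (-A) (-1) * e * \<delta>^h = -1] (mod int p)" unfolding \<delta>_def .
  have "[\<delta>^(2*h) = (A^2 + 4)^h] (mod int p)"
    using cong_pow[OF root_disc_square[OF root], of h] by (simp add: \<delta>_def power_mult)
  also note Dh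
  finally have "[(- 2 * T p 1 (-A) (-1) * (e * e)) * \<delta>^(2*h) = (- 2 * T p 1 (-A) (-1) * (e * e)) * 1] (mod int p)"
    by (rule cong_scalar_left)
  moreover have "(- 2 * e * \<delta>^h) * (T p 1 (-A) (-1) * e * \<delta>^h)
      = (- 2 * T p 1 (-A) (-1) * (e * e)) * \<delta>^(2*h)"
  proof -
    have "\<delta>^(2*h) = \<delta>^h * \<delta>^h" by (simp only: mult_2 power_add)
    then show ?thesis by (simp add: ac_simps)
  qed
  ultimately have "[(- 2 * e * \<delta>^h) * (T p 1 (-A) (-1) * e * \<delta>^h) = - 2 * T p 1 (-A) (-1) * (e * e) * 1] (mod int p)"
    by (simp only:)
  then have "[(- 2 * e * \<delta>^h) * (T p 1 (-A) (-1) * e * \<delta>^h) = - 2 * T p 1 (-A) (-1)] (mod int p)"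
    using e by auto
  from cong_trans[OF cong_sym[OF this] cong_scalar_left[OF K]]
  have "[- (2 * T p 1 (-A) (-1)) = - (- (2 * e * \<delta>^h))] (mod int p)" by simp
  then show ?thesis unfolding \<delta>_def by (simp only: cong_minus_minus_iff)
qed

lemma T_cong_residue_3_mod_4:
  assumes L: "Legendre (A^2 + 4) (int p) = 1" and p4: "p mod 4 = 3"
  shows "[2 * T p 1 (-A) (-1) = - ((A^2 + 4) ^ ((p+1) div 4)) * lucas_u A ((p-1) div 2)] (mod int p)"
proof -
  obtain a where root: "int p dvd a^2 - A * a - 1" and disc: "\<not> int p dvd A^2 + 4"
    and Dh: "[(A^2 + 4)^h = 1] (mod int p)"
    using residue_root[OF L] .
  define \<delta> where "\<delta> = 2 * a - A"
  have "odd h" using p4 p_eq by presburger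
  then obtain t where ht: "h = 2 * t + 1" ..
  obtain e :: int where e: "e = 1 \<or> e = -1" and ae: "[a^h = e] (mod int p)"
    using power_h_cases[OF root_not_dvd[OF root]] by blast
  have u: "[\<delta> * lucas_u A h = 2 * e] (mod int p)"
    using lucas_u_cong_root[OF root \<open>odd h\<close> ae] e unfolding \<delta>_def by auto
  have "h + 1 = 2 * (t + 1)" using ht by simp
  then have "\<delta>^(h+1) = (\<delta>^2)^(t+1)" by (simp only: power_mult)
  then have "[(A^2 + 4)^(t+1) = \<delta>^(h+1)] (mod int p)"
    using cong_pow[OF root_disc_square[OF root], of "t+1"] by (simp add: \<delta>_def cong_sym_eq)
  then have "[- ((A^2 + 4)^(t+1)) * lucas_u A h = - (\<delta>^(h+1)) * lucas_u A h] (mod int p)"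
    by (intro cong_scalar_right) (simp only: cong_minus_minus_iff)
  also have "- (\<delta>^(h+1)) * lucas_u A h = - (\<delta>^h * (\<delta> * lucas_u A h))"
    by (simp add: ac_simps)
  also have "[- (\<delta>^h * (\<delta> * lucas_u A h)) = - (\<delta>^h * (2 * e))] (mod int p)"
    unfolding cong_minus_minus_iff by (rule cong_scalar_left[OF u])
  finally have "[- ((A^2 + 4)^(t+1)) * lucas_u A h = - (2 * e * \<delta>^h)] (mod int p)"
    by (simp add: ac_simps)
  moreover have "(p + 1) div 4 = t + 1" using p_eq ht by simp
  moreover have "(p - 1) div 2 = h" by (simp add: h_def)
  ultimately show ?thesis
    using cong_trans[OF T_cong_root_odd[OF root disc Dh \<open>odd h\<close> ae e] cong_sym] unfolding \<delta>_def
    by simp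
qed

end

section \<open>The ring \<open>\<int>[\<alpha>]\<close> modulo \<open>p\<close>\<close>

context odd_prime
begin

text \<open>Over \<open>\<int>/p\<close>, \<open>\<Prod>\<^sub>a\<^sub>=\<^sub>1\<^sup>p\<^sup>-\<^sup>1 (X - a) = X\<^sup>p\<^sup>-\<^sup>1 - 1\<close>: the difference has degree \<open>< p - 1\<close> and the
  \<open>p - 1\<close> roots \<open>1, \<dots>, p - 1\<close> by Fermat.\<close>
lemma p_dvd_coeff_prod_minus_fermat:
  "int p dvd coeff ((\<Prod>a\<in>{1..p-1}. [:- int a, 1:]) - (monom 1 (p - 1) - 1)) k"
proof (rule prime_dvd_coeff_if_roots[OF prime_int_p, of "int ` {1..p-1}"])
  define F :: "int poly" where "F = (\<Prod>a\<in>{1..p-1}. [:- int a, 1:])"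
  show "finite (int ` {1..p-1})" by simp
  show "\<forall>x\<in>int ` {1..p-1}. \<forall>y\<in>int ` {1..p-1}. int p dvd x - y \<longrightarrow> x = y"
    using p_dvd_small_eq_0 by fastforce
  show "\<forall>x\<in>int ` {1..p-1}. int p dvd poly (F - (monom 1 (p - 1) - 1)) x"
  proof
    fix x assume "x \<in> int ` {1..p-1}"
    then obtain a where a: "a \<in> {1..p-1}" "x = int a" by auto
    then have "poly F x = 0" unfolding F_def poly_prod by (simp add: prod_zero_iff)
    moreover have "[x ^ (p - 1) = 1] (mod int p)"
      using fermat_int_unit p_dvd_small_eq_0[of x] a p_ge_3 by force
    ultimately show "int p dvd poly (F - (monom 1 (p - 1) - 1)) x"
      by (simp add: poly_monom cong_iff_dvd_diff dvd_diff_commute)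
  qed
  have "degree F = p - 1" unfolding F_def by (subst degree_prod_sum_eq) auto
  moreover have "lead_coeff F = 1" unfolding F_def lead_coeff_prod by simp
  ultimately have "coeff (F - (monom 1 (p - 1) - 1)) i = 0" if "i \<ge> p - 1" for i
    using that p_ge_3 by (cases "i = p - 1") (auto simp: coeff_monom coeff_eq_0)
  then have "degree (F - (monom 1 (p - 1) - 1)) < p - 1"
    using p_ge_3 by (intro degree_lessI) auto
  then show "degree (F - (monom 1 (p - 1) - 1)) < card (int ` {1..p-1})"
    by (simp add: card_image)
qed

end

text \<open>Arithmetic in the quadratic extension of \<open>\<int>/p\<close> is done inside \<open>\<real>\<close>: in \<open>\<int>[\<alpha>]\<close> for a real root
  \<open>\<alpha>\<close> of \<open>x\<^sup>2 - A x - 1\<close>, modulo the ideal \<open>p \<int>[\<alpha>]\<close>.\<close>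
locale odd_prime_root = odd_prime +
  fixes A :: int and \<alpha> :: real
  assumes alpha_root: "\<alpha>^2 = of_int A * \<alpha> + 1"
begin

definition Z\<alpha> :: "real set" where
  "Z\<alpha> = {x. \<exists>a b :: int. x = of_int a + of_int b * \<alpha>}"

definition pZ\<alpha> :: "real set" where
  "pZ\<alpha> = {of_nat p * r | r. r \<in> Z\<alpha>}"

definition cong\<alpha> :: "real \<Rightarrow> real \<Rightarrow> bool" where
  "cong\<alpha> x y \<longleftrightarrow> x - y \<in> pZ\<alpha>"

lemma of_int_Z\<alpha> [simp]: "of_int a \<in> Z\<alpha>"
  unfolding Z\<alpha>_def by (rule CollectI, rule exI[of _ a], rule exI[of _ 0]) simp

lemma of_nat_Z\<alpha> [simp]: "of_nat n \<in> Z\<alpha>"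
  using of_int_Z\<alpha>[of "int n"] by simp

lemma numeral_Z\<alpha> [simp]: "numeral k \<in> Z\<alpha>" "0 \<in> Z\<alpha>" "1 \<in> Z\<alpha>"
  using of_int_Z\<alpha>[of "numeral k"] of_int_Z\<alpha>[of 0] of_int_Z\<alpha>[of 1] by simp_all

lemma alpha_Z\<alpha> [simp]: "\<alpha> \<in> Z\<alpha>"
  unfolding Z\<alpha>_def by (rule CollectI, rule exI[of _ 0], rule exI[of _ 1]) simp

lemma add_Z\<alpha> [simp]: "x \<in> Z\<alpha> \<Longrightarrow> y \<in> Z\<alpha> \<Longrightarrow> x + y \<in> Z\<alpha>"
proof -
  assume "x \<in> Z\<alpha>" "y \<in> Z\<alpha>"
  then obtain a b c d where x: "x = of_int a + of_int b * \<alpha>" and y: "y = of_int c + of_int d * \<alpha>"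
    unfolding Z\<alpha>_def by blast
  have "x + y = of_int (a + c) + of_int (b + d) * \<alpha>" unfolding x y by (simp add: algebra_simps)
  then show ?thesis unfolding Z\<alpha>_def by blast
qed

lemma uminus_Z\<alpha> [simp]: "x \<in> Z\<alpha> \<Longrightarrow> - x \<in> Z\<alpha>"
proof -
  assume "x \<in> Z\<alpha>"
  then obtain a b where x: "x = of_int a + of_int b * \<alpha>" unfolding Z\<alpha>_def by blast
  have "- x = of_int (- a) + of_int (- b) * \<alpha>" unfolding x by simp
  then show ?thesis unfolding Z\<alpha>_def by blast
qed

lemma diff_Z\<alpha> [simp]: "x \<in> Z\<alpha> \<Longrightarrow> y \<in> Z\<alpha> \<Longrightarrow> x - y \<in> Z\<alpha>"
  using add_Z\<alpha>[of x "- y"] by simp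

lemma mult_Z\<alpha> [simp]: "x \<in> Z\<alpha> \<Longrightarrow> y \<in> Z\<alpha> \<Longrightarrow> x * y \<in> Z\<alpha>"
proof -
  assume "x \<in> Z\<alpha>" "y \<in> Z\<alpha>"
  then obtain a b c d where x: "x = of_int a + of_int b * \<alpha>" and y: "y = of_int c + of_int d * \<alpha>"
    unfolding Z\<alpha>_def by blast
  have "x * y = of_int (a*c) + of_int (a*d + b*c) * \<alpha> + of_int (b*d) * \<alpha>^2"
    unfolding x y by (simp add: algebra_simps power2_eq_square)
  also have "\<dots> = of_int (a*c + b*d) + of_int (a*d + b*c + b*d*A) * \<alpha>"
    unfolding alpha_root by (simp add: algebra_simps)
  finally show ?thesis unfolding Z\<alpha>_def by blast
qed

lemma power_Z\<alpha> [simp]: "x \<in> Z\<alpha> \<Longrightarrow> x ^ n \<in> Z\<alpha>"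
  by (induction n) simp_all

lemma prod_Z\<alpha>: "(\<And>i. i \<in> I \<Longrightarrow> f i \<in> Z\<alpha>) \<Longrightarrow> (\<Prod>i\<in>I. f i) \<in> Z\<alpha>"
  by (induction I rule: infinite_finite_induct) auto

lemma pZ\<alpha>_add: "x \<in> pZ\<alpha> \<Longrightarrow> y \<in> pZ\<alpha> \<Longrightarrow> x + y \<in> pZ\<alpha>"
  unfolding pZ\<alpha>_def by clarify (rule_tac x = "r + ra" in exI, simp add: algebra_simps)

lemma pZ\<alpha>_uminus: "x \<in> pZ\<alpha> \<Longrightarrow> - x \<in> pZ\<alpha>"
  unfolding pZ\<alpha>_def by clarify (rule_tac x = "- r" in exI, simp)

lemma pZ\<alpha>_mult: "x \<in> pZ\<alpha> \<Longrightarrow> y \<in> Z\<alpha> \<Longrightarrow> x * y \<in> pZ\<alpha>"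
  unfolding pZ\<alpha>_def by clarify (rule_tac x = "r * y" in exI, simp)

lemma pZ\<alpha>_p: "y \<in> Z\<alpha> \<Longrightarrow> of_nat p * y \<in> pZ\<alpha>"
  unfolding pZ\<alpha>_def by blast

lemma pZ\<alpha>_0: "0 \<in> pZ\<alpha>"
  using pZ\<alpha>_p[of 0] by simp

lemma pZ\<alpha>_sum: "(\<And>i. i \<in> I \<Longrightarrow> f i \<in> pZ\<alpha>) \<Longrightarrow> (\<Sum>i\<in>I. f i) \<in> pZ\<alpha>"
  by (induction I rule: infinite_finite_induct) (auto intro: pZ\<alpha>_add pZ\<alpha>_0)

lemma pZ\<alpha>_of_int: "int p dvd c \<Longrightarrow> of_int c \<in> pZ\<alpha>"
  unfolding pZ\<alpha>_def by (elim dvdE) (rule CollectI, rule_tac x = "of_int k" in exI, simp)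

lemma cong\<alpha>_refl [simp]: "cong\<alpha> x x"
  using pZ\<alpha>_0 by (simp add: cong\<alpha>_def)

lemma cong\<alpha>_sym: "cong\<alpha> x y \<Longrightarrow> cong\<alpha> y x"
  unfolding cong\<alpha>_def using pZ\<alpha>_uminus[of "x - y"] by simp

lemma cong\<alpha>_trans [trans]: "cong\<alpha> x y \<Longrightarrow> cong\<alpha> y z \<Longrightarrow> cong\<alpha> x z"
  unfolding cong\<alpha>_def using pZ\<alpha>_add[of "x - y" "y - z"] by simp

lemma cong\<alpha>_add: "cong\<alpha> x y \<Longrightarrow> cong\<alpha> z w \<Longrightarrow> cong\<alpha> (x + z) (y + w)"
  unfolding cong\<alpha>_def using pZ\<alpha>_add[of "x - y" "z - w"] by (simp add: algebra_simps)

lemma cong\<alpha>_diff: "cong\<alpha> x y \<Longrightarrow> cong\<alpha> z w \<Longrightarrow> cong\<alpha> (x - z) (y - w)"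
  unfolding cong\<alpha>_def using pZ\<alpha>_add[of "x - y" "- (z - w)"] pZ\<alpha>_uminus[of "z - w"]
  by (simp add: algebra_simps)

lemma cong\<alpha>_mult_left: "cong\<alpha> x y \<Longrightarrow> z \<in> Z\<alpha> \<Longrightarrow> cong\<alpha> (z * x) (z * y)"
  unfolding cong\<alpha>_def using pZ\<alpha>_mult[of "x - y" z] by (simp add: algebra_simps)

lemma cong\<alpha>_mult_right: "cong\<alpha> x y \<Longrightarrow> z \<in> Z\<alpha> \<Longrightarrow> cong\<alpha> (x * z) (y * z)"
  unfolding cong\<alpha>_def using pZ\<alpha>_mult[of "x - y" z] by (simp add: algebra_simps)

lemma cong\<alpha>_mult:
  "cong\<alpha> x y \<Longrightarrow> cong\<alpha> z w \<Longrightarrow> y \<in> Z\<alpha> \<Longrightarrow> z \<in> Z\<alpha> \<Longrightarrow> cong\<alpha> (x * z) (y * w)"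
  using cong\<alpha>_trans[OF cong\<alpha>_mult_right cong\<alpha>_mult_left] by blast

lemma cong\<alpha>_power: "cong\<alpha> x y \<Longrightarrow> x \<in> Z\<alpha> \<Longrightarrow> y \<in> Z\<alpha> \<Longrightarrow> cong\<alpha> (x ^ n) (y ^ n)"
  by (induction n) (auto intro: cong\<alpha>_mult)

lemma cong\<alpha>_prod:
  assumes "\<And>i. i \<in> I \<Longrightarrow> cong\<alpha> (f i) (g i)" "\<And>i. i \<in> I \<Longrightarrow> f i \<in> Z\<alpha>" "\<And>i. i \<in> I \<Longrightarrow> g i \<in> Z\<alpha>"
  shows "cong\<alpha> (\<Prod>i\<in>I. f i) (\<Prod>i\<in>I. g i)"
  using assms
proof (induction I rule: infinite_finite_induct)
  case (insert x F)
  then show ?case by (simp, intro cong\<alpha>_mult prod_Z\<alpha>) auto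
qed auto

lemma cong\<alpha>_of_int: "[a = b] (mod int p) \<Longrightarrow> cong\<alpha> (of_int a) (of_int b)"
  unfolding cong\<alpha>_def using pZ\<alpha>_of_int[of "a - b"] by (simp add: cong_iff_dvd_diff)

lemma cong\<alpha>_cancel:
  assumes "cong\<alpha> (u * y) (u * z)" "cong\<alpha> (v * u) 1" "v \<in> Z\<alpha>" "y \<in> Z\<alpha>" "z \<in> Z\<alpha>"
  shows "cong\<alpha> y z"
proof -
  have "cong\<alpha> y ((v * u) * y)" using cong\<alpha>_mult_right[OF cong\<alpha>_sym[OF assms(2)] assms(4)] by simp
  also have "cong\<alpha> ((v * u) * y) ((v * u) * z)"
    using cong\<alpha>_mult_left[OF assms(1) assms(3)] by (simp add: ac_simps)
  also have "cong\<alpha> ((v * u) * z) z" using cong\<alpha>_mult_right[OF assms(2) assms(5)] by simp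
  finally show ?thesis .
qed

lemma alpha_mult_conj: "\<alpha> * (\<alpha> - of_int A) = 1"
  using alpha_root by (simp add: power2_eq_square algebra_simps)

lemma cong\<alpha>_cancel_alpha_power:
  assumes "cong\<alpha> (\<alpha>^n * x) (\<alpha>^n * y)" "x \<in> Z\<alpha>" "y \<in> Z\<alpha>"
  shows "cong\<alpha> x y"
proof (rule cong\<alpha>_cancel[OF assms(1) _ _ assms(2,3)])
  show "cong\<alpha> ((\<alpha> - of_int A)^n * \<alpha>^n) 1"
    using alpha_mult_conj by (simp flip: power_mult_distrib add: mult.commute)
qed simp

lemma prod_minus_fermat:
  assumes "x \<in> Z\<alpha>"
  shows "cong\<alpha> (\<Prod>a\<in>{1..p-1}. x - of_nat a) (x^(p-1) - 1)"
proof -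
  define H where "H = map_poly (of_int :: int \<Rightarrow> real)
    ((\<Prod>a\<in>{1..p-1}. [:- int a, 1:]) - (monom 1 (p - 1) - 1))"
  have "poly H x = (\<Sum>i\<le>degree H. coeff H i * x ^ i)" by (rule poly_altdef)
  also have "\<dots> \<in> pZ\<alpha>"
    using pZ\<alpha>_mult[OF pZ\<alpha>_of_int[OF p_dvd_coeff_prod_minus_fermat] power_Z\<alpha>[OF assms]]
    by (intro pZ\<alpha>_sum) (simp add: H_def coeff_map_poly)
  finally show ?thesis
    unfolding cong\<alpha>_def H_def map_poly_of_int_diff map_poly_of_int_prod
    by (simp add: map_poly_pCons map_poly_monom poly_prod poly_monom)
qed

lemma disc_square: "(2 * \<alpha> - of_int A)^2 = of_int (A^2 + 4)"
  using alpha_root by (simp add: power2_eq_square algebra_simps)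

lemma frobenius:
  assumes x: "x \<in> Z\<alpha>" and y: "y \<in> Z\<alpha>"
  shows "cong\<alpha> ((x + y)^p) (x^p + y^p)"
proof -
  define f where "f k = of_nat (p choose k) * x^k * y^(p-k)" for k
  have "(x + y)^p = (\<Sum>k\<le>p. f k)" unfolding f_def by (rule binomial_ring)
  also have "{..p} = insert 0 (insert p {1..p-1})" using p_ge_3 by auto
  also have "(\<Sum>k\<in>insert 0 (insert p {1..p-1}). f k) = f 0 + (f p + (\<Sum>k\<in>{1..p-1}. f k))"
    using p_ge_3 by (simp add: sum.insert)
  finally have e: "(x + y)^p - (x^p + y^p) = (\<Sum>k\<in>{1..p-1}. f k)" by (simp add: f_def)
  have "(\<Sum>k\<in>{1..p-1}. f k) \<in> pZ\<alpha>"
  proof (rule pZ\<alpha>_sum)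
    fix k assume k: "k \<in> {1..p-1}"
    have "p dvd (p choose k)" using k p_ge_3 by (intro dvd_choose_prime prime_p) auto
    then obtain m where m: "p choose k = p * m" by auto
    have "f k = of_nat p * (of_nat m * x^k * y^(p-k))" unfolding f_def m by simp
    then show "f k \<in> pZ\<alpha>" using x y by (simp add: pZ\<alpha>_p)
  qed
  then show ?thesis unfolding cong\<alpha>_def e .
qed

lemma frobenius_alpha:
  assumes D: "[(A^2 + 4)^h = -1] (mod int p)"
  shows "cong\<alpha> (\<alpha>^p) (of_int A - \<alpha>)" and "cong\<alpha> (\<alpha>^(p+1)) (-1)"
proof -
  define s where "s = 2 * \<alpha> - of_int A"
  have s: "s \<in> Z\<alpha>" by (simp add: s_def)
  have "p - 1 = 2 * h" using p_eq by simp
  then have "s^p = (s^2)^h * s" by (simp add: power_p flip: power_mult)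
  also have "\<dots> = of_int ((A^2 + 4)^h) * s"
    using disc_square by (simp add: s_def)
  also have "cong\<alpha> (of_int ((A^2 + 4)^h) * s) (of_int (-1) * s)"
    by (rule cong\<alpha>_mult_right[OF cong\<alpha>_of_int[OF D] s])
  finally have s_p: "cong\<alpha> (s^p) (- s)" by simp
  have "cong\<alpha> (2 * \<alpha>^p) ((2 * \<alpha>)^p)"
    using cong\<alpha>_mult_right[OF cong\<alpha>_of_int[OF fermat_int[of 2]], of "\<alpha>^p"]
    by (simp add: power_mult_distrib cong\<alpha>_sym)
  also have "(2 * \<alpha>)^p = (of_int A + s)^p" by (simp add: s_def)
  also have "cong\<alpha> \<dots> ((of_int A)^p + s^p)" by (rule frobenius) (simp_all add: s)
  also have "cong\<alpha> \<dots> (of_int A + - s)"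
    using cong\<alpha>_add[OF cong\<alpha>_of_int[OF fermat_int[of A]] s_p] by simp
  also have "of_int A + - s = 2 * (of_int A - \<alpha>)" by (simp add: s_def)
  finally have "cong\<alpha> (2 * \<alpha>^p) (2 * (of_int A - \<alpha>))" .
  moreover have "cong\<alpha> ((of_nat h + 1) * 2) 1"
  proof -
    have "(of_nat h + 1) * 2 - 1 = (of_nat p :: real) * 1" using p_eq by simp
    then show ?thesis unfolding cong\<alpha>_def using pZ\<alpha>_p[of 1] by simp
  qed
  ultimately show alpha_p: "cong\<alpha> (\<alpha>^p) (of_int A - \<alpha>)"
    by (rule cong\<alpha>_cancel) simp_all
  have "cong\<alpha> (\<alpha>^p * \<alpha>) ((of_int A - \<alpha>) * \<alpha>)" by (rule cong\<alpha>_mult_right[OF alpha_p]) simp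
  moreover have "(of_int A - \<alpha>) * \<alpha> = -1" using alpha_mult_conj by (simp add: algebra_simps)
  ultimately show "cong\<alpha> (\<alpha>^(p+1)) (-1)" by (simp add: mult.commute)
qed

lemma prod_half_squares:
  assumes x: "x \<in> Z\<alpha>"
  shows "cong\<alpha> (\<Prod>i\<in>S. of_nat i^2 - x^2) ((-1)^h * (x^(p-1) - 1))"
proof -
  have "{1..p-1} = S \<union> {h+1..p-1}" using p_eq by auto
  then have "(\<Prod>a\<in>{1..p-1}. x - of_nat a) = (\<Prod>i\<in>S. x - of_nat i) * (\<Prod>a\<in>{h+1..p-1}. x - of_nat a)"
    by (simp add: prod.union_disjoint)
  also have "(\<Prod>a\<in>{h+1..p-1}. x - of_nat a) = (\<Prod>i\<in>S. x - (of_nat p - of_nat i))"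
    by (rule prod.reindex_bij_witness[of _ "\<lambda>i. p - i" "\<lambda>i. p - i"]) (use p_eq in \<open>auto simp: of_nat_diff\<close>)
  also have "cong\<alpha> ((\<Prod>i\<in>S. x - of_nat i) * \<dots>) ((\<Prod>i\<in>S. x - of_nat i) * (\<Prod>i\<in>S. x + of_nat i))"
  proof (intro cong\<alpha>_mult_left cong\<alpha>_prod)
    fix i
    show "cong\<alpha> (x - (of_nat p - of_nat i)) (x + of_nat i)"
      unfolding cong\<alpha>_def using pZ\<alpha>_p[of "-1"] by simp
  qed (use x in \<open>auto intro: prod_Z\<alpha>\<close>)
  also have "(\<Prod>i\<in>S. x - of_nat i) * (\<Prod>i\<in>S. x + of_nat i) = (\<Prod>i\<in>S. - (of_nat i^2 - x^2))"
    by (simp add: prod.distrib[symmetric] power2_eq_square algebra_simps)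
  also have "\<dots> = (-1)^h * (\<Prod>i\<in>S. of_nat i^2 - x^2)"
    using prod_uminus[of "\<lambda>i. of_nat i^2 - x^2" S] by simp
  finally have "cong\<alpha> ((-1)^h * (\<Prod>i\<in>S. of_nat i^2 - x^2)) (x^(p-1) - 1)"
    using cong\<alpha>_trans[OF cong\<alpha>_sym prod_minus_fermat[OF x]] by blast
  from cong\<alpha>_mult_left[OF this, of "(-1)^h"]
  show ?thesis by (simp flip: mult.assoc power_add)
qed

lemma prod_half_squares_alpha_mult:
  assumes j: "j \<in> S"
  shows "cong\<alpha> (\<Prod>i\<in>S. of_nat i^2 - (\<alpha> * of_nat j)^2) ((-1)^h * (\<alpha>^(p-1) - 1))"
proof -
  have "cong\<alpha> (\<alpha>^(p-1) * of_int (int j ^ (p-1))) (\<alpha>^(p-1) * of_int 1)"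
    by (intro cong\<alpha>_mult_left cong\<alpha>_of_int fermat_int_unit not_p_dvd_half j) simp
  then have "cong\<alpha> ((-1)^h * ((\<alpha> * of_nat j)^(p-1) - 1)) ((-1)^h * (\<alpha>^(p-1) - 1))"
    by (intro cong\<alpha>_mult_left cong\<alpha>_diff) (simp_all add: power_mult_distrib)
  moreover have "\<alpha> * of_nat j \<in> Z\<alpha>" by simp
  ultimately show ?thesis using cong\<alpha>_trans[OF prod_half_squares] by blast
qed

lemma power_minus_one_minus_alpha_sq:
  "((-1)^n * (- 1 - \<alpha>^2))^n = \<alpha>^n * (2 * \<alpha> - of_int A)^n"
proof -
  have "- 1 - \<alpha>^2 = - (\<alpha> * (2 * \<alpha> - of_int A))"
    using alpha_root by (simp add: algebra_simps power2_eq_square)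
  then have eq: "(-1)^n * (- 1 - \<alpha>^2) = (-1)^(n+1) * (\<alpha> * (2 * \<alpha> - of_int A))" by simp
  have sign: "((-1::real)^(n+1))^n = 1"
    by (simp only: power_mult[symmetric] neg_one_even_power even_mult_iff) simp
  have "((-1)^n * (- 1 - \<alpha>^2))^n = ((-1)^(n+1))^n * (\<alpha> * (2 * \<alpha> - of_int A))^n"
    unfolding eq by (rule power_mult_distrib)
  also have "\<dots> = \<alpha>^n * (2 * \<alpha> - of_int A)^n" by (simp only: sign mult_1_left power_mult_distrib)
  finally show ?thesis .
qed

lemma alpha_power_T_eq_prod:
  assumes nz: "\<And>i j. i \<in> S \<Longrightarrow> j \<in> S \<Longrightarrow> \<not> int p dvd quad A i j"
  shows "\<alpha>^(h*h) * of_int (T p 1 (-A) (-1)) = (\<Prod>j\<in>S. \<Prod>i\<in>S. of_nat i^2 - (\<alpha> * of_nat j)^2)"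
proof -
  have "{(i,j). i \<in> S \<and> j \<in> S \<and> \<not> int p dvd quad A i j} = S \<times> S" using nz by auto
  then have T: "T p 1 (-A) (-1) = (\<Prod>(i,j)\<in>S \<times> S. quad A i j)"
    by (simp only: T_eq_prod_quad)
  have quad: "\<alpha> * of_int (quad A i j) = (of_nat i - \<alpha> * of_nat j) * (of_nat j + \<alpha> * of_nat i)" for i j
  proof -
    have "(of_nat i - \<alpha> * of_nat j) * (of_nat j + \<alpha> * of_nat i)
        = \<alpha> * of_nat i^2 + of_nat i * of_nat j - \<alpha>^2 * of_nat i * of_nat j - \<alpha> * of_nat j^2"
      by (simp add: power2_eq_square algebra_simps)
    also have "\<dots> = \<alpha> * of_int (quad A i j)"
      unfolding alpha_root quad_def by (simp add: algebra_simps power2_eq_square)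
    finally show ?thesis by simp
  qed
  have "\<alpha>^(h*h) * of_int (T p 1 (-A) (-1)) = (\<Prod>(i,j)\<in>S \<times> S. \<alpha> * of_int (quad A i j))"
    by (simp add: T prod.distrib case_prod_beta)
  also have "\<dots> = (\<Prod>(i,j)\<in>S \<times> S. of_nat i - \<alpha> * of_nat j) * (\<Prod>(i,j)\<in>S \<times> S. of_nat j + \<alpha> * of_nat i)"
    by (simp add: quad prod_pairs_mult)
  also have "(\<Prod>(i,j)\<in>S \<times> S. of_nat j + \<alpha> * of_nat i) = (\<Prod>(i,j)\<in>S \<times> S. of_nat i + \<alpha> * of_nat j)"
    by (rule prod.reindex_bij_witness[of _ "\<lambda>(i,j). (j,i)" "\<lambda>(i,j). (j,i)"]) auto
  also have "(\<Prod>(i,j)\<in>S \<times> S. of_nat i - \<alpha> * of_nat j) * \<dots>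
      = (\<Prod>(i,j)\<in>S \<times> S. (of_nat i - \<alpha> * of_nat j) * (of_nat i + \<alpha> * of_nat j))"
    by (rule prod_pairs_mult[symmetric])
  also have "\<dots> = (\<Prod>i\<in>S. \<Prod>j\<in>S. of_nat i^2 - (\<alpha> * of_nat j)^2)"
    by (simp add: power2_eq_square algebra_simps prod.cartesian_product)
  also have "\<dots> = (\<Prod>j\<in>S. \<Prod>i\<in>S. of_nat i^2 - (\<alpha> * of_nat j)^2)"
    by (rule prod.swap)
  finally show ?thesis .
qed

lemma lucas_u_alpha_even:
  assumes "even m"
  shows "(2 * \<alpha> - of_int A) * of_int (lucas_u A m) * \<alpha>^m = (\<alpha>^m)^2 - 1"
proof -
  have binet: "(2 * \<alpha> - of_int A) * of_int (lucas_u A m) = \<alpha>^m - (of_int A - \<alpha>)^m"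
    using lucas_u_binet_dvd[of 0 \<alpha> A m] alpha_root by simp
  have "\<alpha>^m * (of_int A - \<alpha>)^m = (\<alpha> * (of_int A - \<alpha>))^m" by (simp add: power_mult_distrib)
  also have "\<alpha> * (of_int A - \<alpha>) = -1" using alpha_mult_conj by (simp add: algebra_simps)
  finally have conj: "\<alpha>^m * (of_int A - \<alpha>)^m = 1" using assms by simp
  have "(2 * \<alpha> - of_int A) * of_int (lucas_u A m) * \<alpha>^m = (\<alpha>^m - (of_int A - \<alpha>)^m) * \<alpha>^m"
    by (simp only: binet)
  also have "\<dots> = \<alpha>^m * \<alpha>^m - \<alpha>^m * (of_int A - \<alpha>)^m" by (simp add: algebra_simps)
  finally show ?thesis by (simp add: conj power2_eq_square)
qed

lemma T_cong\<alpha>: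
  assumes D: "[(A^2 + 4)^h = -1] (mod int p)"
    and nz: "\<And>i j. i \<in> S \<Longrightarrow> j \<in> S \<Longrightarrow> \<not> int p dvd quad A i j"
  shows "cong\<alpha> (\<alpha>^(h*h + h) * of_int (T p 1 (-A) (-1))) ((2 * \<alpha> - of_int A)^h)"
proof -
  define c where "c = (-1)^h * (\<alpha>^(p-1) - 1)"
  have c: "c \<in> Z\<alpha>" by (simp add: c_def)
  have "cong\<alpha> (\<Prod>j\<in>S. \<Prod>i\<in>S. of_nat i^2 - (\<alpha> * of_nat j)^2) (\<Prod>j\<in>S. c)"
    unfolding c_def
  proof (rule cong\<alpha>_prod)
    fix j assume "j \<in> S"
    then show "cong\<alpha> (\<Prod>i\<in>S. of_nat i^2 - (\<alpha> * of_nat j)^2) ((-1)^h * (\<alpha>^(p-1) - 1))"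
      by (rule prod_half_squares_alpha_mult)
  qed (auto intro: prod_Z\<alpha>)
  then have "cong\<alpha> (\<alpha>^(h*h) * of_int (T p 1 (-A) (-1))) (\<Prod>j\<in>S. c)"
    using alpha_power_T_eq_prod[OF nz] by simp
  then have "cong\<alpha> (\<alpha>^(h*h) * of_int (T p 1 (-A) (-1)) * (\<alpha>^2)^h) ((c * \<alpha>^2)^h)"
    by (simp add: cong\<alpha>_mult_right power_mult_distrib)
  also have "cong\<alpha> ((c * \<alpha>^2)^h) (((-1)^h * (- 1 - \<alpha>^2))^h)"
  proof (intro cong\<alpha>_power)
    have "c * \<alpha>^2 = (-1)^h * (\<alpha>^(p+1) - \<alpha>^2)"
      using p_ge_3 by (simp add: c_def algebra_simps flip: power_add)
    also have "cong\<alpha> \<dots> ((-1)^h * (- 1 - \<alpha>^2))"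
      by (intro cong\<alpha>_mult_left cong\<alpha>_diff frobenius_alpha(2)[OF D]) simp_all
    finally show "cong\<alpha> (c * \<alpha>^2) ((-1)^h * (- 1 - \<alpha>^2))" .
  qed (simp_all add: c)
  also have "((-1)^h * (- 1 - \<alpha>^2))^h = \<alpha>^h * (2 * \<alpha> - of_int A)^h"
    by (rule power_minus_one_minus_alpha_sq)
  finally have "cong\<alpha> (\<alpha>^(h*h) * of_int (T p 1 (-A) (-1)) * (\<alpha>^2)^h) (\<alpha>^h * (2 * \<alpha> - of_int A)^h)" .
  moreover have "\<alpha>^(h*h) * of_int (T p 1 (-A) (-1)) * (\<alpha>^2)^h = \<alpha>^h * (\<alpha>^(h*h + h) * of_int (T p 1 (-A) (-1)))"
  proof -
    have "(\<alpha>^2)^h = \<alpha>^h * \<alpha>^h" by (simp add: power_mult[symmetric] mult_2 power_add)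
    then show ?thesis by (simp add: power_add ac_simps)
  qed
  ultimately have "cong\<alpha> (\<alpha>^h * (\<alpha>^(h*h + h) * of_int (T p 1 (-A) (-1)))) (\<alpha>^h * (2 * \<alpha> - of_int A)^h)"
    by simp
  then show ?thesis by (rule cong\<alpha>_cancel_alpha_power) simp_all
qed

text \<open>When \<open>A\<^sup>2 + 4\<close> is not a square, \<open>1, \<alpha>\<close> are linearly independent over \<open>\<rat>\<close>, so an integer in
  \<open>p \<int>[\<alpha>]\<close> is divisible by \<open>p\<close>.\<close>
lemma p_dvd_if_cong\<alpha>_0:
  assumes nsq: "\<And>w. A^2 + 4 \<noteq> w^2" and c: "cong\<alpha> (of_int c) 0"
  shows "int p dvd c"
proof -
  obtain a b where ab: "of_int c = of_nat p * (of_int a + of_int b * \<alpha>)"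
    using c unfolding cong\<alpha>_def pZ\<alpha>_def Z\<alpha>_def by auto
  show ?thesis
  proof (cases "b = 0")
    case True
    then have "of_int c = (of_int (int p * a) :: real)" using ab by simp
    then have "c = int p * a" by (simp only: of_int_eq_iff)
    then show ?thesis by simp
  next
    case False
    define u where "u = c - int p * a"
    define v where "v = int p * b"
    have v0: "v \<noteq> 0" using False p_ge_3 by (simp add: v_def)
    have uv: "of_int u = of_int v * \<alpha>" using ab by (simp add: u_def v_def algebra_simps)
    have "(of_int u :: real)^2 = of_int v^2 * \<alpha>^2" unfolding uv by (simp add: power_mult_distrib)
    also have "\<dots> = of_int A * of_int v * (of_int v * \<alpha>) + of_int v^2"
      unfolding alpha_root by (simp add: algebra_simps power2_eq_square)
    finally have "(of_int (u^2) :: real) = of_int (A * v * u + v^2)"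
      unfolding uv[symmetric] by simp
    then have "u^2 = A * v * u + v^2" by (simp only: of_int_eq_iff)
    then have sq: "(2 * u - A * v)^2 = (A^2 + 4) * v^2" by (simp add: power2_eq_square algebra_simps)
    then have "v^2 dvd (2 * u - A * v)^2" by simp
    then have "v dvd 2 * u - A * v" by (simp add: pow_divides_pow_iff)
    then obtain w where "2 * u - A * v = v * w" by auto
    with sq have "v^2 * w^2 = v^2 * (A^2 + 4)" by (simp add: power_mult_distrib mult.commute)
    then have "w^2 = A^2 + 4" using v0 by simp
    then show ?thesis using nsq[of w] by simp
  qed
qed

end

section \<open>The non-residue case\<close>

context odd_prime
begin

lemma nonresidue_facts:
  assumes L: "Legendre (A^2 + 4) (int p) = -1"
  shows "[(A^2 + 4)^h = -1] (mod int p)" and "\<And>w. A^2 + 4 \<noteq> w^2"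
    and "\<And>i j. i \<in> S \<Longrightarrow> j \<in> S \<Longrightarrow> \<not> int p dvd quad A i j"
proof -
  define D where "D = A^2 + 4"
  have nQ: "\<not> QuadRes (int p) D" using L by (auto simp: D_def Legendre_def split: if_splits)
  show "[(A^2 + 4)^h = -1] (mod int p)"
    using euler_criterion_p[of "A^2 + 4"] L by (simp add: cong_sym_eq)
  show "A^2 + 4 \<noteq> w^2" for w
  proof
    assume "A^2 + 4 = w^2"
    then have "QuadRes (int p) D" unfolding QuadRes_def D_def by (intro exI[of _ w]) simp
    with nQ show False ..
  qed
  show "\<not> int p dvd quad A i j" if j: "j \<in> S" for i j
  proof
    assume d: "int p dvd quad A i j"
    obtain j' where j': "[int j * j' = 1] (mod int p)"
      using cong_solve_coprime_int[OF coprime_int_p[OF not_p_dvd_half[OF j]]] by blast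
    define z where "z = j' * (2 * int i - A * int j)"
    have "z^2 - D = j'^2 * (4 * quad A i j) + D * ((int j * j')^2 - 1)"
      unfolding z_def quad_def D_def by (simp add: power2_eq_square algebra_simps)
    moreover have "int p dvd (int j * j')^2 - 1"
      using cong_pow[OF j', of 2] by (simp add: cong_iff_dvd_diff)
    ultimately have "[z^2 = D] (mod int p)"
      using d by (simp add: cong_iff_dvd_diff)
    then show False using nQ unfolding QuadRes_def by blast
  qed
qed

lemma ex_odd_prime_root: "\<exists>\<alpha>. odd_prime_root p A \<alpha>"
proof
  define \<alpha> :: real where "\<alpha> = (of_int A + sqrt (of_int (A^2 + 4))) / 2"
  have "sqrt (of_int (A^2 + 4)) ^ 2 = (of_int (A^2 + 4) :: real)" by simp
  then have "\<alpha>^2 = of_int A * \<alpha> + 1"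
    unfolding \<alpha>_def by (simp add: power2_eq_square field_simps)
  then show "odd_prime_root p A \<alpha>" by unfold_locales
qed

end

context odd_prime_root
begin

lemma T_cong_nonresidue_1_mod_4:
  assumes L: "Legendre (A^2 + 4) (int p) = -1" and p4: "p mod 4 = 1"
  shows "[T p 1 (-A) (-1) = (- (A^2) - 4) ^ ((p-1) div 4)] (mod int p)"
proof -
  note D = nonresidue_facts[OF L]
  have "even h" using p4 p_eq by presburger
  then obtain t where ht: "h = 2 * t" ..
  have "(p + 1) * t = h * h + h" using p_eq ht by (simp add: algebra_simps)
  then have "(\<alpha>^(p+1))^t = \<alpha>^(h*h + h)" by (simp only: power_mult[symmetric])
  then have "cong\<alpha> ((-1)^t * of_int (T p 1 (-A) (-1))) (\<alpha>^(h*h + h) * of_int (T p 1 (-A) (-1)))"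
    using cong\<alpha>_mult_right[OF cong\<alpha>_power[OF frobenius_alpha(2)[OF D(1)]], of _ t] cong\<alpha>_sym by simp
  also have "cong\<alpha> \<dots> ((2 * \<alpha> - of_int A)^h)" by (rule T_cong\<alpha>[OF D(1,3)])
  also have "(2 * \<alpha> - of_int A)^h = of_int ((A^2 + 4)^t)"
    using disc_square by (simp add: ht power_mult)
  finally have "cong\<alpha> ((-1)^t * ((-1)^t * of_int (T p 1 (-A) (-1)))) ((-1)^t * of_int ((A^2 + 4)^t))"
    by (rule cong\<alpha>_mult_left) simp
  then have "cong\<alpha> (of_int (T p 1 (-A) (-1) - (- (A^2) - 4)^t)) 0"
    by (simp add: cong\<alpha>_def power_mult_distrib[symmetric] flip: mult.assoc power_add)
  then have "int p dvd T p 1 (-A) (-1) - (- (A^2) - 4)^t" by (rule p_dvd_if_cong\<alpha>_0[OF D(2)])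
  moreover have "(p - 1) div 4 = t" using p_eq ht by simp
  ultimately show ?thesis by (simp add: cong_iff_dvd_diff)
qed

lemma alpha_half_power_sq:
  assumes D: "[(A^2 + 4)^h = -1] (mod int p)"
  shows "cong\<alpha> ((\<alpha>^(h+1))^2) (-1)"
proof -
  have "2 * (h + 1) = p + 1" using p_eq by simp
  then have "(\<alpha>^(h+1))^2 = \<alpha>^(p+1)" by (metis power_mult mult.commute)
  then show ?thesis using frobenius_alpha(2)[OF D] by simp
qed

lemma nonresidue_lucas_cong:
  assumes D: "[(A^2 + 4)^h = -1] (mod int p)" and ht: "h = 2 * t + 1"
  shows "cong\<alpha> ((\<alpha>^(h+1))^(h+2) * of_int ((- (A^2) - 4) ^ (t+1) * lucas_u A (h+1)))
    (-2 * (2 * \<alpha> - of_int A)^h)"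
proof -
  define s where "s = 2 * \<alpha> - of_int A"
  define \<gamma> where "\<gamma> = \<alpha>^(h+1)"
  define u :: real where "u = of_int (lucas_u A (h+1))"
  have Z: "s \<in> Z\<alpha>" "\<gamma> \<in> Z\<alpha>" "u \<in> Z\<alpha>" by (simp_all add: s_def \<gamma>_def u_def)
  note \<gamma>2 = alpha_half_power_sq[OF D, folded \<gamma>_def]
  have "s * u * \<gamma> = \<gamma>^2 - 1"
    using lucas_u_alpha_even[of "h+1"] ht by (simp add: s_def u_def \<gamma>_def)
  then have su\<gamma>: "cong\<alpha> (s * u * \<gamma>) (-2)" using cong\<alpha>_diff[OF \<gamma>2 cong\<alpha>_refl[of 1]] by simp
  have "h + 1 = 2 * (t + 1)" using ht by simp
  then have "s^(h+1) = (s^2)^(t+1)" by (simp only: power_mult)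
  also have "s^2 = of_int (A^2 + 4)" using disc_square by (simp add: s_def)
  finally have "s^(h+1) = of_int ((A^2 + 4)^(t+1))" by simp
  moreover have "(- (A^2) - 4) ^ (t+1) = (-1)^(t+1) * (A^2 + 4)^(t+1)"
  proof -
    have "- (A^2) - 4 = (-1) * (A^2 + 4)" by simp
    then show ?thesis by (simp only: power_mult_distrib)
  qed
  ultimately have neg_disc: "of_int ((- (A^2) - 4) ^ (t+1)) = (-1)^(t+1) * s^(h+1)" by simp
  have sh: "s^(h+1) = s^h * s" by simp
  have g: "\<gamma>^(h+2) = \<gamma> * (\<gamma>^2)^(t+1)" using ht by (simp flip: power_mult power_Suc)
  have "\<gamma>^(h+2) * of_int ((- (A^2) - 4) ^ (t+1) * lucas_u A (h+1))
      = (-1)^(t+1) * s^h * (s * u * \<gamma>) * (\<gamma>^2)^(t+1)"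
    unfolding g of_int_mult neg_disc sh u_def[symmetric] by (simp only: ac_simps)
  also have "cong\<alpha> \<dots> ((-1)^(t+1) * s^h * (-2) * (-1)^(t+1))"
    by (intro cong\<alpha>_mult cong\<alpha>_mult_left su\<gamma> cong\<alpha>_power[OF \<gamma>2] cong\<alpha>_refl) (simp_all add: Z)
  also have "(-1)^(t+1) * s^h * (-2) * (-1)^(t+1) = -2 * s^h"
    by (simp add: ac_simps flip: power_add)
  finally show ?thesis unfolding \<gamma>_def s_def .
qed

lemma T_cong_nonresidue_3_mod_4:
  assumes L: "Legendre (A^2 + 4) (int p) = -1" and p4: "p mod 4 = 3"
  shows "[2 * T p 1 (-A) (-1) = (- (A^2) - 4) ^ ((p+1) div 4) * lucas_u A ((p+1) div 2)] (mod int p)"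
proof -
  note D = nonresidue_facts[OF L]
  have "odd h" using p4 p_eq by presburger
  then obtain t where ht: "h = 2 * t + 1" ..
  define \<gamma> where "\<gamma> = \<alpha>^(h+1)"
  have "h * h + h = (h + 1) * h" by (simp add: algebra_simps)
  then have "\<alpha>^(h*h + h) = \<gamma>^h" unfolding \<gamma>_def by (simp only: power_mult)
  with T_cong\<alpha>[OF D(1,3)]
  have K: "cong\<alpha> (\<gamma>^h * of_int (T p 1 (-A) (-1))) ((2 * \<alpha> - of_int A)^h)" by simp
  have "\<gamma>^(h+2) * of_int (2 * T p 1 (-A) (-1)) = 2 * (\<gamma>^2 * (\<gamma>^h * of_int (T p 1 (-A) (-1))))"
    by (simp add: power_add power2_eq_square ac_simps)
  also have "cong\<alpha> \<dots> (2 * (-1 * (2 * \<alpha> - of_int A)^h))"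
    using alpha_half_power_sq[OF D(1), folded \<gamma>_def]
    by (intro cong\<alpha>_mult_left cong\<alpha>_mult K) (simp_all add: \<gamma>_def)
  finally have "cong\<alpha> (\<gamma>^(h+2) * of_int (2 * T p 1 (-A) (-1)))
      (\<gamma>^(h+2) * of_int ((- (A^2) - 4) ^ (t+1) * lucas_u A (h+1)))"
    using cong\<alpha>_trans[OF _ cong\<alpha>_sym[OF nonresidue_lucas_cong[OF D(1) ht, folded \<gamma>_def]]] by simp
  moreover have "\<gamma>^(h+2) = \<alpha>^((h+1) * (h+2))" unfolding \<gamma>_def by (rule power_mult[symmetric])
  ultimately have "cong\<alpha> (\<alpha>^((h+1) * (h+2)) * of_int (2 * T p 1 (-A) (-1)))
      (\<alpha>^((h+1) * (h+2)) * of_int ((- (A^2) - 4) ^ (t+1) * lucas_u A (h+1)))"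
    by (simp only:)
  then have "cong\<alpha> (of_int (2 * T p 1 (-A) (-1))) (of_int ((- (A^2) - 4) ^ (t+1) * lucas_u A (h+1)))"
    by (rule cong\<alpha>_cancel_alpha_power) simp_all
  then have "int p dvd 2 * T p 1 (-A) (-1) - (- (A^2) - 4) ^ (t+1) * lucas_u A (h+1)"
    by (intro p_dvd_if_cong\<alpha>_0[OF D(2)]) (simp add: cong\<alpha>_def)
  moreover have "(p + 1) div 4 = t + 1" "(p + 1) div 2 = h + 1" using p_eq ht by simp_all
  ultimately show ?thesis by (simp add: cong_iff_dvd_diff)
qed

end

theorem theorem1p4:
  fixes p :: nat and A :: int
  assumes "prime p" and "odd p"
  shows "(int p dvd A^2 + 4 \<longrightarrow>
           p mod 4 = 1 \<and>
           (\<exists>k::nat\<in>{0,1}.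
              [A = 2 * (-1)^k * fact ((p-1) div 2)] (mod int p) \<and>
              (p mod 8 = 1 \<longrightarrow>
                 [T p 1 (-A) (-1) = (-1)^((p+7) div 8) * fact ((p-1) div 2)] (mod int p)) \<and>
              (p mod 8 = 5 \<longrightarrow>
                 [T p 1 (-A) (-1) = (-1)^(k + (p-5) div 8)] (mod int p))))
       \<and> (Legendre (A^2 + 4) (int p) = 1 \<longrightarrow>
           (p mod 4 = 1 \<longrightarrow>
              [T p 1 (-A) (-1) = - ((A^2 + 4) ^ ((p-1) div 4))] (mod int p)) \<and>
           (p mod 4 = 3 \<longrightarrow>
              [2 * T p 1 (-A) (-1) = - ((A^2 + 4) ^ ((p+1) div 4)) * lucas_u A ((p-1) div 2)] (mod int p)))
       \<and> (Legendre (A^2 + 4) (int p) = -1 \<longrightarrow>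
           (p mod 4 = 1 \<longrightarrow>
              [T p 1 (-A) (-1) = (- (A^2) - 4) ^ ((p-1) div 4)] (mod int p)) \<and>
           (p mod 4 = 3 \<longrightarrow>
              [2 * T p 1 (-A) (-1) = (- (A^2) - 4) ^ ((p+1) div 4) * lucas_u A ((p+1) div 2)] (mod int p)))"
proof -
  interpret odd_prime p using assms by unfold_locales
  obtain \<alpha> where "odd_prime_root p A \<alpha>" using ex_odd_prime_root by blast
  then interpret odd_prime_root p A \<alpha> .
  have "(p - 1) div 2 = h" by (simp add: h_def)
  then show ?thesis
    using T_cong_if_p_dvd_disc T_cong_residue_1_mod_4 T_cong_residue_3_mod_4
      T_cong_nonresidue_1_mod_4 T_cong_nonresidue_3_mod_4 by auto
qed

end
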